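(* Assume $\kappa=\kappa^{<\kappa}$ and let $p$ be a $P_\kappa$-point of $S_\kappa$. There is a family $\{A^f: f\in 2^\kappa\}$ of clopen subsets of $S_\kappa\setminus\{p\}$ such that for all $f,g\in 2^\kappa$: (1) $A^f\neq\emptyset$ whenever $f$ has non-empty support; (2) $A^f$ is non-compact whenever $f$ has unbounded support in $\kappa$; (3) $A^{1-f}\cap A^f=\emptyset$; (4) if $f\le g$ pointwise then $A^f\subseteq A^g$; (5) if $f$ and $g$ agree on a final segment $[\delta,\kappa)$ for some $\delta<\kappa$, then there is a clopen neighbourhood $U$ of $p$ in $S_\kappa$ with $A^f\cap U=A^g\cap U$.
   Context: A space is zero-dimensional if it has a base of clopen sets. For a zero-dimensional space $X$ and an open $U\subseteq X$, the ($X$-)type $\tau(U)$ is the least cardinal $\tau$ such that $U$ is a union of $\tau$ many clopen subsets of $X$. A zero-dimensional space is an $F_\kappa$-space if every open subset of type less than $\kappa$ is $C^*$-embedded (every bounded continuous real-valued function on it extends continuously to the whole space). A space is a $G_\kappa$-space if every non-empty intersection of fewer than $\kappa$ open sets has non-empty interior. A $\kappa$-Parovičenko space is a compact Hausdorff zero-dimensional $F_\kappa$- and $G_\kappa$-space without isolated points (no weight restriction is imposed). If $\kappa=\kappa^{<\kappa}$ there is, up to homeomorphism, a unique $\kappa$-Parovičenko space of weight $\kappa$; it is denoted $S_\kappa$. A point $p$ of a space $Y$ is a $P_\kappa$-point of $Y$ if the intersection of fewer than $\kappa$ neighbourhoods of $p$ in $Y$ contains an open neighbourhood of $p$ in $Y$.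 For $f:\kappa\to\{0,1\}$, its support is $f^{-1}(\{1\})$, and $1-f$ denotes the pointwise complement. *)

theory Defs
  imports "HOL-Analysis.Analysis" "HOL-Library.FuncSet"
begin

definition card_lt :: "'a set \<Rightarrow> 'b set \<Rightarrow> bool" where
  "card_lt A B \<longleftrightarrow> (card_of A, card_of B) \<in> ordLess"

definition card_le :: "'a set \<Rightarrow> 'b set \<Rightarrow> bool" where
  "card_le A B \<longleftrightarrow> (card_of A, card_of B) \<in> ordLeq"

text \<open>The cardinal kappa is represented by a type 'k carrying a cardinal order r
  (an initial ordinal on UNIV); its elements are the ordinals below kappa.
  kappa^{<kappa} is the cardinality of the set of all functions from a proper
  initial segment [0,alpha) of kappa into kappa (tagged by alpha).\<close>

definition kappa_lt_kappa_funs :: "'k rel \<Rightarrow> ('k \<times> ('k \<Rightarrow> 'k)) set" where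
  "kappa_lt_kappa_funs r = {(\<alpha>, g). g \<in> underS r \<alpha> \<rightarrow>\<^sub>E (UNIV :: 'k set)}"

definition kappa_eq_kappa_lt_kappa :: "'k rel \<Rightarrow> bool" where
  "kappa_eq_kappa_lt_kappa r \<longleftrightarrow>
     (card_of (kappa_lt_kappa_funs r), card_of (UNIV :: 'k set)) \<in> ordIso"

definition clopenin :: "'a topology \<Rightarrow> 'a set \<Rightarrow> bool" where
  "clopenin X U \<longleftrightarrow> openin X U \<and> closedin X U"

definition is_base :: "'a topology \<Rightarrow> 'a set set \<Rightarrow> bool" where
  "is_base X B \<longleftrightarrow> (\<forall>V\<in>B. openin X V) \<and>
     (\<forall>U. openin X U \<longrightarrow> (\<exists>\<F>\<subseteq>B. \<Union>\<F> = U))"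

definition zero_dimensional :: "'a topology \<Rightarrow> bool" where
  "zero_dimensional X \<longleftrightarrow> (\<exists>B. is_base X B \<and> (\<forall>V\<in>B. clopenin X V))"

definition weight_eq :: "'a topology \<Rightarrow> 'k set \<Rightarrow> bool" where
  "weight_eq X K \<longleftrightarrow> (\<exists>B. is_base X B \<and> card_le B K) \<and> (\<forall>B. is_base X B \<longrightarrow> card_le K B)"

definition type_less :: "'a topology \<Rightarrow> 'k set \<Rightarrow> 'a set \<Rightarrow> bool" where
  "type_less X K U \<longleftrightarrow> (\<exists>\<F>. (\<forall>V\<in>\<F>. clopenin X V) \<and> \<Union>\<F> = U \<and> card_lt \<F> K)"

definition C_star_embedded :: "'a topology \<Rightarrow> 'a set \<Rightarrow> bool" where
  "C_star_embedded X U \<longleftrightarrow>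
     (\<forall>f. continuous_map (subtopology X U) euclideanreal f \<and> bounded (f ` U) \<longrightarrow>
        (\<exists>g. continuous_map X euclideanreal g \<and> (\<forall>x\<in>U. g x = f x)))"

definition F_kappa_space :: "'k set \<Rightarrow> 'a topology \<Rightarrow> bool" where
  "F_kappa_space K X \<longleftrightarrow> zero_dimensional X \<and>
     (\<forall>U. openin X U \<and> type_less X K U \<longrightarrow> C_star_embedded X U)"

definition G_kappa_space :: "'k set \<Rightarrow> 'a topology \<Rightarrow> bool" where
  "G_kappa_space K X \<longleftrightarrow>
     (\<forall>\<U>. (\<forall>V\<in>\<U>. openin X V) \<and> card_lt \<U> K \<and> topspace X \<inter> \<Inter>\<U> \<noteq> {} \<longrightarrow>
        X interior_of (topspace X \<inter> \<Inter>\<U>) \<noteq> {})"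

definition kappa_Parovicenko :: "'k set \<Rightarrow> 'a topology \<Rightarrow> bool" where
  "kappa_Parovicenko K X \<longleftrightarrow> compact_space X \<and> Hausdorff_space X \<and> zero_dimensional X \<and>
     F_kappa_space K X \<and> G_kappa_space K X \<and> (\<forall>x\<in>topspace X. \<not> openin X {x})"

definition neighbourhood :: "'a topology \<Rightarrow> 'a \<Rightarrow> 'a set \<Rightarrow> bool" where
  "neighbourhood Y p N \<longleftrightarrow> (\<exists>V. openin Y V \<and> p \<in> V \<and> V \<subseteq> N)"

definition P_kappa_point :: "'k set \<Rightarrow> 'a topology \<Rightarrow> 'a \<Rightarrow> bool" where
  "P_kappa_point K Y p \<longleftrightarrow> p \<in> topspace Y \<and>
     (\<forall>\<N>. (\<forall>N\<in>\<N>. neighbourhood Y p N) \<and> card_lt \<N> K \<longrightarrow>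
        (\<exists>V. openin Y V \<and> p \<in> V \<and> V \<subseteq> \<Inter>\<N>))"

end

theory Submission
  imports Defs
begin

text \<open>The family is read off from a tower of length \<open>\<kappa>\<close> of clopen sets \<open>K \<alpha>\<close> exhausting
  \<open>S\<^sub>\<kappa> - {p}\<close>, each carrying a map \<open>H \<alpha>\<close> from subsets of \<open>[0, \<alpha>]\<close> to clopen subsets of
  \<open>K \<alpha>\<close> that behaves like a Boolean homomorphism and is coherent with the earlier levels; then
  \<open>A\<^sup>f = \<Union>\<^sub>\<alpha> H \<alpha> (supp f)\<close>. At stage \<open>\<alpha>\<close> the \<open>P\<^sub>\<kappa>\<close>-point property gives a clopen
  neighbourhood \<open>W\<close> of \<open>p\<close> missing all earlier \<open>K \<beta>\<close>; the new index \<open>\<alpha>\<close> is sent onto a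
  nonempty clopen subset of \<open>W\<close> (\<open>p\<close> is not isolated), and the earlier maps are extended to
  the complement of \<open>W\<close> by a second recursion of length \<open>\<kappa>\<close> through an enumeration of all
  subsets of \<open>\<alpha>\<close>, which exists as \<open>\<kappa>\<^bsup><\<kappa>\<^esup> = \<kappa>\<close>. Each of its steps separates two disjoint
  unions of fewer than \<open>\<kappa>\<close> clopen sets by a clopen set, which is exactly what the
  \<open>F\<^sub>\<kappa>\<close>-property provides in a compact zero-dimensional space.\<close>

unbundle cardinal_syntax

section \<open>Cardinalities below \<kappa>\<close>

lemma card_lt_subset: "card_lt A K \<Longrightarrow> B \<subseteq> A \<Longrightarrow> card_lt B K"
  unfolding card_lt_def by (rule ordLeq_ordLess_trans[OF card_of_mono1])

lemma card_lt_image: "card_lt A K \<Longrightarrow> card_lt (f ` A) K"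
  unfolding card_lt_def by (rule ordLeq_ordLess_trans[OF card_of_image])

lemma card_lt_finite: "infinite K \<Longrightarrow> finite A \<Longrightarrow> card_lt A K"
  unfolding card_lt_def
  by (rule finite_ordLess_infinite)
    (use card_of_Well_order[of A] card_of_Well_order[of K] in \<open>auto simp: Field_card_of\<close>)

lemma card_lt_Un: "infinite K \<Longrightarrow> card_lt A K \<Longrightarrow> card_lt B K \<Longrightarrow> card_lt (A \<union> B) K"
  unfolding card_lt_def by (rule card_of_Un_ordLess_infinite)

lemma card_lt_Times_le:
  assumes K: "infinite K" and AB: "|A| \<le>o |B|" and B: "card_lt B K"
  shows "card_lt (A \<times> B) K"
proof (cases "finite B")
  case True
  then have "finite (A \<times> B)" using card_of_ordLeq_finite[OF AB] by simp
  then show ?thesis by (rule card_lt_finite[OF K])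
next
  case False
  have "|A \<times> B| \<le>o |B \<times> B|" by (rule card_of_Times_mono1[OF AB])
  moreover have "|B \<times> B| =o |B|" by (rule card_of_Times_same_infinite[OF False])
  ultimately have "|A \<times> B| \<le>o |B|" by (rule ordLeq_ordIso_trans)
  then show ?thesis using B unfolding card_lt_def by (rule ordLeq_ordLess_trans)
qed

lemma card_lt_Times:
  assumes K: "infinite K" and A: "card_lt A K" and B: "card_lt B K"
  shows "card_lt (A \<times> B) K"
proof (cases "|A| \<le>o |B|")
  case True
  then show ?thesis using card_lt_Times_le[OF K _ B] by blast
next
  case False
  then have "|B| \<le>o |A|" using ordLeq_total[OF card_of_Well_order card_of_Well_order] by blast
  then have "card_lt (B \<times> A) K" using card_lt_Times_le[OF K _ A] by blast
  moreover have "A \<times> B = prod.swap ` (B \<times> A)" by auto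
  ultimately show ?thesis using card_lt_image by metis
qed

lemma card_lt_underS:
  fixes r :: "'k rel"
  assumes "card_order r"
  shows "card_lt (underS r a) (UNIV :: 'k set)"
proof -
  have "UNIV = Field r \<and> Card_order r" by (rule card_order_on_Card_order[OF assms])
  then have "|underS r a| <o r" by (intro card_of_underS) auto
  moreover have "r =o |UNIV :: 'k set|" using assms by (rule card_of_unique)
  ultimately show ?thesis unfolding card_lt_def by (rule ordLess_ordIso_trans)
qed

lemma bounded_subsets_enumeration:
  fixes r :: "'k rel"
  assumes kk: "kappa_eq_kappa_lt_kappa r" and inf: "infinite (UNIV :: 'k set)"
  shows "\<exists>E :: 'k \<Rightarrow> 'k set. \<forall>\<alpha> S. S \<subseteq> underS r \<alpha> \<longrightarrow> (\<exists>\<xi>. E \<xi> = S)"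
proof -
  have "|UNIV :: 'k set| =o |kappa_lt_kappa_funs r|"
    using kk unfolding kappa_eq_kappa_lt_kappa_def by (rule ordIso_symmetric)
  then obtain g where g: "bij_betw g (UNIV :: 'k set) (kappa_lt_kappa_funs r)"
    unfolding card_of_ordIso[symmetric] by blast
  obtain one zero :: 'k where one_zero: "one \<noteq> zero"
    using ex_new_if_finite[OF inf, of "{undefined}"] by blast
  define E where "E \<xi> = {\<beta> \<in> underS r (fst (g \<xi>)). snd (g \<xi>) \<beta> = one}" for \<xi>
  have "\<exists>\<xi>. E \<xi> = S" if S: "S \<subseteq> underS r \<alpha>" for \<alpha> S
  proof -
    define h where "h \<beta> = (if \<beta> \<in> underS r \<alpha> then (if \<beta> \<in> S then one else zero) else undefined)" for \<beta>
    have "(\<alpha>, h) \<in> kappa_lt_kappa_funs r" unfolding kappa_lt_kappa_funs_def h_def by auto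
    then obtain \<xi> where "g \<xi> = (\<alpha>, h)" using g unfolding bij_betw_def by (metis imageE)
    then have "E \<xi> = S" unfolding E_def h_def using S one_zero by auto
    then show ?thesis by blast
  qed
  then show ?thesis by blast
qed

section \<open>Clopen sets\<close>

lemma clopenin_Int: "clopenin X A \<Longrightarrow> clopenin X B \<Longrightarrow> clopenin X (A \<inter> B)"
  unfolding clopenin_def by blast

lemma clopenin_Un: "clopenin X A \<Longrightarrow> clopenin X B \<Longrightarrow> clopenin X (A \<union> B)"
  unfolding clopenin_def by blast

lemma clopenin_diff: "clopenin X A \<Longrightarrow> clopenin X B \<Longrightarrow> clopenin X (A - B)"
  unfolding clopenin_def by blast

lemma clopenin_topspace: "clopenin X (topspace X)"
  unfolding clopenin_def by simp

lemma clopenin_empty: "clopenin X {}"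
  unfolding clopenin_def by simp

lemma clopenin_subset: "clopenin X A \<Longrightarrow> A \<subseteq> topspace X"
  unfolding clopenin_def by (simp add: openin_subset)

lemma zero_dimensional_clopen_nbhd:
  assumes "zero_dimensional X" "openin X U" "x \<in> U"
  shows "\<exists>C. clopenin X C \<and> x \<in> C \<and> C \<subseteq> U"
proof -
  obtain B where B: "is_base X B" "\<forall>V\<in>B. clopenin X V"
    using assms(1) unfolding zero_dimensional_def by blast
  obtain \<F> where "\<F> \<subseteq> B" "\<Union>\<F> = U" using B(1) assms(2) unfolding is_base_def by blast
  then show ?thesis using assms(3) B(2) by blast
qed

lemma compact_zero_dimensional_clopen_separation:
  assumes X: "compact_space X" "zero_dimensional X"
    and A: "closedin X A" and B: "closedin X B" and AB: "A \<inter> B = {}"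
  shows "\<exists>C. clopenin X C \<and> A \<subseteq> C \<and> C \<inter> B = {}"
proof -
  define \<U> where "\<U> = {C. clopenin X C \<and> C \<inter> B = {}}"
  have "A \<subseteq> \<Union>\<U>"
  proof
    fix a assume a: "a \<in> A"
    have "openin X (topspace X - B)" "a \<in> topspace X - B"
      using B a AB closedin_subset[OF A] by auto
    then obtain C where "clopenin X C" "a \<in> C" "C \<subseteq> topspace X - B"
      using zero_dimensional_clopen_nbhd[OF X(2)] by blast
    then show "a \<in> \<Union>\<U>" unfolding \<U>_def by blast
  qed
  moreover have "\<forall>U\<in>\<U>. openin X U" unfolding \<U>_def clopenin_def by blast
  ultimately obtain \<F> where \<F>: "finite \<F>" "\<F> \<subseteq> \<U>" "A \<subseteq> \<Union>\<F>"
    using closedin_compact_space[OF X(1) A] unfolding compactin_def by meson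
  have "clopenin X (\<Union>\<F>)"
    using \<F>(1,2) unfolding \<U>_def clopenin_def by (intro conjI openin_Union closedin_Union) auto
  moreover have "\<Union>\<F> \<inter> B = {}" using \<F>(2) unfolding \<U>_def by blast
  ultimately show ?thesis using \<F>(3) by blast
qed

lemma continuous_map_indicator_open_partition:
  assumes "openin X P" "openin X Q" "P \<inter> Q = {}"
  shows "continuous_map (subtopology X (P \<union> Q)) euclideanreal (\<lambda>x. if x \<in> P then 1 else 0)"
  unfolding continuous_map_def
proof (intro conjI allI impI)
  fix U :: "real set"
  have "{x \<in> topspace (subtopology X (P \<union> Q)). (if x \<in> P then 1 else 0) \<in> U}
      = ((if 1 \<in> U then P else {}) \<union> (if 0 \<in> U then Q else {})) \<inter> (P \<union> Q)"
    using assms openin_subset by auto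
  moreover have "openin X ((if 1 \<in> U then P else {}) \<union> (if 0 \<in> U then Q else {}))"
    using assms by auto
  ultimately show "openin (subtopology X (P \<union> Q))
      {x \<in> topspace (subtopology X (P \<union> Q)). (if x \<in> P then 1 else 0) \<in> U}"
    by (simp add: openin_subtopology_Int)
qed simp

text \<open>In an \<open>F\<^sub>\<kappa>\<close>-space the indicator of \<open>P\<close> on \<open>P \<union> Q\<close> extends continuously; its level sets
  at 1 and 0 are disjoint closed sets, which compactness separates by a clopen set.\<close>

lemma F_kappa_clopen_separation:
  assumes X: "compact_space X" "F_kappa_space K X"
    and \<F>: "\<forall>C\<in>\<F>. clopenin X C" "card_lt \<F> K"
    and P: "openin X P" and Q: "openin X Q" and PQ: "P \<inter> Q = {}" "P \<union> Q = \<Union>\<F>"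
  shows "\<exists>C. clopenin X C \<and> P \<subseteq> C \<and> C \<inter> Q = {}"
proof -
  define f where "f x = (if x \<in> P then 1 else 0 :: real)" for x
  have "type_less X K (P \<union> Q)" unfolding type_less_def using \<F> PQ(2) by blast
  then have "C_star_embedded X (P \<union> Q)" using X(2) P Q unfolding F_kappa_space_def by blast
  moreover have "continuous_map (subtopology X (P \<union> Q)) euclideanreal f"
    unfolding f_def by (rule continuous_map_indicator_open_partition[OF P Q PQ(1)])
  moreover have "bounded (f ` (P \<union> Q))"
    by (rule finite_imp_bounded, rule finite_subset[of _ "{0, 1}"]) (auto simp: f_def)
  ultimately obtain g where g: "continuous_map X euclideanreal g" "\<And>x. x \<in> P \<union> Q \<Longrightarrow> g x = f x"
    unfolding C_star_embedded_def by blast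
  have closed_level: "closedin X {x \<in> topspace X. g x \<in> {c}}" for c
    by (rule closedin_continuous_map_preimage[OF g(1)]) simp
  have "zero_dimensional X" using X(2) unfolding F_kappa_space_def by blast
  moreover have "{x \<in> topspace X. g x \<in> {1}} \<inter> {x \<in> topspace X. g x \<in> {0}} = {}" by auto
  ultimately obtain C where C: "clopenin X C" "{x \<in> topspace X. g x \<in> {1}} \<subseteq> C"
      "C \<inter> {x \<in> topspace X. g x \<in> {0}} = {}"
    using compact_zero_dimensional_clopen_separation[OF X(1) _ closed_level closed_level] by blast
  moreover have "P \<subseteq> {x \<in> topspace X. g x \<in> {1}}" "Q \<subseteq> {x \<in> topspace X. g x \<in> {0}}"
    using g(2) PQ(1) openin_subset[OF P] openin_subset[OF Q] unfolding f_def by auto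
  ultimately show ?thesis by blast
qed

lemma P_kappa_point_clopen_nbhd:
  assumes "zero_dimensional X" "P_kappa_point K X p"
    and "\<forall>N\<in>\<N>. clopenin X N \<and> p \<in> N" "card_lt \<N> K"
  shows "\<exists>W. clopenin X W \<and> p \<in> W \<and> W \<subseteq> \<Inter>\<N>"
proof -
  have "\<forall>N\<in>\<N>. neighbourhood X p N" using assms(3) unfolding neighbourhood_def clopenin_def by blast
  then obtain V where "openin X V" "p \<in> V" "V \<subseteq> \<Inter>\<N>"
    using assms(2,4) unfolding P_kappa_point_def by blast
  moreover obtain C where "clopenin X C" "p \<in> C" "C \<subseteq> V"
    using zero_dimensional_clopen_nbhd[OF assms(1) \<open>openin X V\<close> \<open>p \<in> V\<close>] by blast
  ultimately show ?thesis by blast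
qed

lemma clopen_cover_avoiding_point:
  assumes zd: "zero_dimensional X" and w: "weight_eq X (UNIV :: 'k set)" and p: "closedin X {p}"
  shows "\<exists>V :: 'k \<Rightarrow> 'a set. (\<forall>\<alpha>. clopenin X (V \<alpha>) \<and> p \<notin> V \<alpha>) \<and> topspace X - {p} \<subseteq> (\<Union>\<alpha>. V \<alpha>)"
proof -
  obtain B where B: "is_base X B" "card_le B (UNIV :: 'k set)" using w unfolding weight_eq_def by blast
  then obtain \<iota> :: "'a set \<Rightarrow> 'k" where \<iota>: "inj_on \<iota> B"
    unfolding card_le_def card_of_ordLeq[symmetric] by blast
  define good where "good b C \<longleftrightarrow> clopenin X C \<and> b \<subseteq> C \<and> p \<notin> C" for b C
  define V where "V \<alpha> = (if \<alpha> \<in> \<iota> ` B \<and> (\<exists>C. good (inv_into B \<iota> \<alpha>) C)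
      then SOME C. good (inv_into B \<iota> \<alpha>) C else {})" for \<alpha>
  have "clopenin X (V \<alpha>) \<and> p \<notin> V \<alpha>" for \<alpha>
  proof (cases "\<alpha> \<in> \<iota> ` B \<and> (\<exists>C. good (inv_into B \<iota> \<alpha>) C)")
    case True
    then show ?thesis using someI_ex[of "good (inv_into B \<iota> \<alpha>)"] unfolding V_def good_def by simp
  next
    case False
    then show ?thesis unfolding V_def by (simp only: if_False) (simp add: clopenin_empty)
  qed
  moreover have "topspace X - {p} \<subseteq> (\<Union>\<alpha>. V \<alpha>)"
  proof
    fix x assume x: "x \<in> topspace X - {p}"
    have "openin X (topspace X - {p})" using p unfolding closedin_def by blast
    then obtain C where C: "clopenin X C" "x \<in> C" "C \<subseteq> topspace X - {p}"
      using zero_dimensional_clopen_nbhd[OF zd] x by blast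
    then obtain \<F> where "\<F> \<subseteq> B" "\<Union>\<F> = C" using B(1) unfolding is_base_def clopenin_def by blast
    then obtain b where b: "b \<in> B" "x \<in> b" "b \<subseteq> C" using C(2) by blast
    then have ex: "\<exists>C. good b C" using C unfolding good_def by blast
    have "V (\<iota> b) = (SOME C. good b C)" unfolding V_def using b(1) ex inv_into_f_f[OF \<iota> b(1)] by simp
    then have "b \<subseteq> V (\<iota> b)" using someI_ex[OF ex] unfolding good_def by simp
    then show "x \<in> (\<Union>\<alpha>. V \<alpha>)" using b(2) by blast
  qed
  ultimately show ?thesis by blast
qed

section \<open>The well-order of \<kappa>\<close>

locale kappa_order =
  fixes r :: "'k rel"
  assumes card: "card_order r" and inf: "infinite (UNIV :: 'k set)"
begin

lemma well_order: "well_order_on UNIV r"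
  using card unfolding card_order_on_def by blast

lemma r_refl: "(a, a) \<in> r"
  using well_order
  unfolding well_order_on_def linear_order_on_def partial_order_on_def preorder_on_def refl_on_def
  by blast

lemma r_trans: "(a, b) \<in> r \<Longrightarrow> (b, c) \<in> r \<Longrightarrow> (a, c) \<in> r"
  using well_order
  unfolding well_order_on_def linear_order_on_def partial_order_on_def preorder_on_def trans_def
  by blast

lemma r_antisym: "(a, b) \<in> r \<Longrightarrow> (b, a) \<in> r \<Longrightarrow> a = b"
  using well_order unfolding well_order_on_def linear_order_on_def partial_order_on_def antisym_def
  by blast

lemma r_total: "(a, b) \<in> r \<or> (b, a) \<in> r"
proof (cases "a = b")
  case False
  then show ?thesis using well_order unfolding well_order_on_def linear_order_on_def total_on_def by blast
qed (simp add: r_refl)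

lemma r_wf: "wf (r - Id)"
  using well_order unfolding well_order_on_def by blast

lemma underS_iff: "b \<in> underS r a \<longleftrightarrow> (b, a) \<in> r \<and> b \<noteq> a"
  unfolding underS_def by blast

lemma under_iff: "b \<in> under r a \<longleftrightarrow> (b, a) \<in> r"
  unfolding under_def by blast

lemma not_in_underS: "a \<notin> underS r a"
  by (simp add: underS_iff)

lemma under_subset_underS: "b \<in> underS r a \<Longrightarrow> under r b \<subseteq> underS r a"
  unfolding underS_def under_def using r_trans r_antisym by blast

lemma underS_mono: "(a, b) \<in> r \<Longrightarrow> underS r a \<subseteq> underS r b"
  unfolding underS_def using r_trans r_antisym by blast

lemma underS_trans: "b \<in> underS r a \<Longrightarrow> c \<in> underS r b \<Longrightarrow> c \<in> underS r a"
  unfolding underS_iff using r_trans r_antisym by blast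

lemma not_r_imp_underS: "(a, b) \<notin> r \<Longrightarrow> b \<in> underS r a"
  unfolding underS_iff using r_total r_refl by blast

lemma common_upper_bound: "\<exists>m. (a, m) \<in> r \<and> (b, m) \<in> r"
  using r_total r_refl by blast

end

section \<open>Coherent levels\<close>

text \<open>\<open>H \<alpha>\<close> is a Boolean homomorphism from subsets of \<open>[0, \<alpha>]\<close> to clopen subsets of \<open>K \<alpha>\<close>
  extending the earlier levels; the last clause bounds how far apart the images of two index
  sets are in terms of where the sets themselves meet.\<close>

definition level_ok :: "'a topology \<Rightarrow> 'k rel \<Rightarrow> ('k \<Rightarrow> 'a set) \<Rightarrow> ('k \<Rightarrow> 'k set \<Rightarrow> 'a set) \<Rightarrow> 'k \<Rightarrow> bool"
  where "level_ok X r K H \<alpha> \<longleftrightarrow>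
    clopenin X (K \<alpha>) \<and> (\<forall>\<beta>. (\<beta>, \<alpha>) \<in> r \<longrightarrow> K \<beta> \<subseteq> K \<alpha>) \<and>
    (\<forall>S. clopenin X (H \<alpha> S) \<and> H \<alpha> S \<subseteq> K \<alpha>) \<and>
    (\<forall>S. H \<alpha> (- S) = K \<alpha> - H \<alpha> S) \<and>
    (\<forall>S. H \<alpha> S = H \<alpha> (S \<inter> under r \<alpha>)) \<and>
    (\<forall>S \<beta>. (\<beta>, \<alpha>) \<in> r \<longrightarrow> H \<alpha> S \<inter> K \<beta> = H \<beta> S) \<and>
    (\<forall>S T. S \<inter> T \<inter> under r \<alpha> = {} \<longrightarrow> H \<alpha> S \<inter> H \<alpha> T = {}) \<and>
    (\<forall>S T \<gamma>. \<gamma> \<in> underS r \<alpha> \<longrightarrow> S \<inter> T \<inter> under r \<alpha> \<subseteq> underS r \<gamma> \<longrightarrow> H \<alpha> S \<inter> H \<alpha> T \<subseteq> K \<gamma>)"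

lemma level_okD:
  assumes "level_ok X r K H \<alpha>"
  shows level_ok_K_clopen: "clopenin X (K \<alpha>)"
    and level_ok_K_mono: "(\<beta>, \<alpha>) \<in> r \<Longrightarrow> K \<beta> \<subseteq> K \<alpha>"
    and level_ok_H_clopen: "clopenin X (H \<alpha> S)"
    and level_ok_H_subset: "H \<alpha> S \<subseteq> K \<alpha>"
    and level_ok_H_compl: "H \<alpha> (- S) = K \<alpha> - H \<alpha> S"
    and level_ok_H_restrict: "H \<alpha> S = H \<alpha> (S \<inter> under r \<alpha>)"
    and level_ok_H_coherent: "(\<beta>, \<alpha>) \<in> r \<Longrightarrow> H \<alpha> S \<inter> K \<beta> = H \<beta> S"
    and level_ok_H_disjoint: "S \<inter> T \<inter> under r \<alpha> = {} \<Longrightarrow> H \<alpha> S \<inter> H \<alpha> T = {}"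
    and level_ok_H_Int_below:
      "\<gamma> \<in> underS r \<alpha> \<Longrightarrow> S \<inter> T \<inter> under r \<alpha> \<subseteq> underS r \<gamma> \<Longrightarrow> H \<alpha> S \<inter> H \<alpha> T \<subseteq> K \<gamma>"
  using assms unfolding level_ok_def by auto

section \<open>Extending the levels below \<open>\<alpha>\<close> to a clopen set \<open>K\<close>\<close>

definition lower_union :: "'k rel \<Rightarrow> 'k \<Rightarrow> ('k \<Rightarrow> 'k set \<Rightarrow> 'a set) \<Rightarrow> 'k set \<Rightarrow> 'a set" where
  "lower_union r \<alpha> H S = (\<Union>\<beta>\<in>underS r \<alpha>. H \<beta> S)"

text \<open>A pair \<open>(B, L)\<close> is a permitted overlap: images of index sets meeting only inside \<open>B\<close> may
  meet only inside \<open>L\<close>.\<close>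

definition bounds :: "'k rel \<Rightarrow> 'k \<Rightarrow> ('k \<Rightarrow> 'a set) \<Rightarrow> ('k set \<times> 'a set) set" where
  "bounds r \<alpha> K = insert ({}, {}) ((\<lambda>\<beta>. (underS r \<beta>, K \<beta>)) ` underS r \<alpha>)"

text \<open>\<open>slice r E \<alpha> \<xi> s\<close> is the \<open>\<xi>\<close>-th enumerated subset of \<open>\<alpha>\<close> or its complement in \<open>\<alpha>\<close>,
  according to \<open>s\<close>; it is to be represented by the \<open>\<xi>\<close>-th separator \<open>C \<xi>\<close> or by its
  complement in \<open>K\<close>.\<close>

definition slice :: "'k rel \<Rightarrow> ('k \<Rightarrow> 'k set) \<Rightarrow> 'k \<Rightarrow> 'k \<Rightarrow> bool \<Rightarrow> 'k set" where
  "slice r E \<alpha> \<xi> s = (if s then E \<xi> \<inter> underS r \<alpha> else underS r \<alpha> - E \<xi>)"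

definition signed :: "'a set \<Rightarrow> ('k \<Rightarrow> 'a set) \<Rightarrow> 'k \<Rightarrow> bool \<Rightarrow> 'a set" where
  "signed K C \<xi> s = (if s then C \<xi> else K - C \<xi>)"

text \<open>The index sets already represented when the \<open>\<xi>\<close>-th separator is chosen, paired with
  their representatives.\<close>

definition pieces ::
  "'k rel \<Rightarrow> ('k \<Rightarrow> 'k set) \<Rightarrow> 'k \<Rightarrow> 'a set \<Rightarrow> ('k \<Rightarrow> 'a set) \<Rightarrow> 'k \<Rightarrow> ('k set \<times> 'a set) set" where
  "pieces r E \<alpha> K C \<xi> = insert (underS r \<alpha>, K)
     ((\<lambda>(\<eta>, t). (slice r E \<alpha> \<eta> t, signed K C \<eta> t)) ` (underS r \<xi> \<times> UNIV))"

text \<open>The clopen sets that the \<open>\<xi>\<close>-th separator must contain when it is to represent \<open>S\<close>.\<close>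

definition constraints :: "'k rel \<Rightarrow> ('k \<Rightarrow> 'k set) \<Rightarrow> 'k \<Rightarrow> 'a set \<Rightarrow> ('k \<Rightarrow> 'a set) \<Rightarrow>
    ('k \<Rightarrow> 'k set \<Rightarrow> 'a set) \<Rightarrow> ('k \<Rightarrow> 'a set) \<Rightarrow> 'k \<Rightarrow> 'k set \<Rightarrow> 'a set set" where
  "constraints r E \<alpha> K Kb Hb C \<xi> S = (\<lambda>\<beta>. Hb \<beta> S) ` underS r \<alpha> \<union>
     {G - L | T G B L. (T, G) \<in> pieces r E \<alpha> K C \<xi> \<and> (B, L) \<in> bounds r \<alpha> Kb \<and> T - S \<subseteq> B}"

definition separator_step :: "'a topology \<Rightarrow> 'k rel \<Rightarrow> ('k \<Rightarrow> 'k set) \<Rightarrow> 'k \<Rightarrow> 'a set \<Rightarrow>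
    ('k \<Rightarrow> 'a set) \<Rightarrow> ('k \<Rightarrow> 'k set \<Rightarrow> 'a set) \<Rightarrow> ('k \<Rightarrow> 'a set) \<Rightarrow> 'k \<Rightarrow> 'a set" where
  "separator_step X r E \<alpha> K Kb Hb C \<xi> = K \<inter>
     (SOME D. clopenin X D \<and> \<Union>(constraints r E \<alpha> K Kb Hb C \<xi> (slice r E \<alpha> \<xi> True)) \<subseteq> D \<and>
        D \<inter> \<Union>(constraints r E \<alpha> K Kb Hb C \<xi> (slice r E \<alpha> \<xi> False)) = {})"

definition separators :: "'a topology \<Rightarrow> 'k rel \<Rightarrow> ('k \<Rightarrow> 'k set) \<Rightarrow> 'k \<Rightarrow> 'a set \<Rightarrow>
    ('k \<Rightarrow> 'a set) \<Rightarrow> ('k \<Rightarrow> 'k set \<Rightarrow> 'a set) \<Rightarrow> 'k \<Rightarrow> 'a set" where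
  "separators X r E \<alpha> K Kb Hb = wfrec (r - Id) (separator_step X r E \<alpha> K Kb Hb)"

definition extension :: "'a topology \<Rightarrow> 'k rel \<Rightarrow> ('k \<Rightarrow> 'k set) \<Rightarrow> 'k \<Rightarrow> 'a set \<Rightarrow>
    ('k \<Rightarrow> 'a set) \<Rightarrow> ('k \<Rightarrow> 'k set \<Rightarrow> 'a set) \<Rightarrow> 'k set \<Rightarrow> 'a set" where
  "extension X r E \<alpha> K Kb Hb S =
     (let z = SOME z. slice r E \<alpha> (fst z) (snd z) = S \<inter> underS r \<alpha>
      in signed K (separators X r E \<alpha> K Kb Hb) (fst z) (snd z))"

lemma bounds_empty: "({}, {}) \<in> bounds r \<alpha> K"
  unfolding bounds_def by blast

lemma underS_in_bounds: "\<gamma> \<in> underS r \<alpha> \<Longrightarrow> (underS r \<gamma>, K \<gamma>) \<in> bounds r \<alpha> K"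
  unfolding bounds_def by blast

lemma bounds_cong:
  "(\<And>\<beta>. \<beta> \<in> underS r \<alpha> \<Longrightarrow> K \<beta> = K' \<beta>) \<Longrightarrow> bounds r \<alpha> K = bounds r \<alpha> K'"
  unfolding bounds_def by (simp cong: image_cong)

lemma extension_cong:
  assumes "\<And>\<beta>. \<beta> \<in> underS r \<alpha> \<Longrightarrow> Kb \<beta> = Kb' \<beta>" "\<And>\<beta>. \<beta> \<in> underS r \<alpha> \<Longrightarrow> Hb \<beta> = Hb' \<beta>"
  shows "extension X r E \<alpha> K Kb Hb = extension X r E \<alpha> K Kb' Hb'"
proof -
  have "bounds r \<alpha> Kb = bounds r \<alpha> Kb'" by (rule bounds_cong[OF assms(1)])
  moreover have "(\<lambda>\<beta>. Hb \<beta> S) ` underS r \<alpha> = (\<lambda>\<beta>. Hb' \<beta> S) ` underS r \<alpha>" for S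
    using assms(2) by (simp cong: image_cong)
  ultimately have "constraints r E \<alpha> K Kb Hb = constraints r E \<alpha> K Kb' Hb'"
    unfolding constraints_def by (intro ext) simp
  then show ?thesis unfolding extension_def separators_def separator_step_def by (simp only:)
qed

lemma (in kappa_order) extension_subset: "extension X r E \<alpha> K Kb Hb S \<subseteq> K"
proof -
  have "separators X r E \<alpha> K Kb Hb \<xi> \<subseteq> K" for \<xi>
    unfolding separators_def by (subst wfrec[OF r_wf]) (simp add: separator_step_def)
  then show ?thesis unfolding extension_def signed_def Let_def by auto
qed

locale extension_step = kappa_order r for r :: "'k rel" +
  fixes X :: "'a topology" and E :: "'k \<Rightarrow> 'k set" and \<alpha> :: 'k
    and K :: "'a set" and Kb :: "'k \<Rightarrow> 'a set" and Hb :: "'k \<Rightarrow> 'k set \<Rightarrow> 'a set"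
  assumes compact: "compact_space X" and F_kappa: "F_kappa_space (UNIV :: 'k set) X"
    and E_enum: "\<And>S. S \<subseteq> underS r \<alpha> \<Longrightarrow> \<exists>\<xi>. E \<xi> = S"
    and K_clopen: "clopenin X K"
    and K_empty: "underS r \<alpha> = {} \<Longrightarrow> K = {}"
    and Kb_subset_K: "\<And>\<beta>. \<beta> \<in> underS r \<alpha> \<Longrightarrow> Kb \<beta> \<subseteq> K"
    and levels_ok: "\<And>\<beta>. \<beta> \<in> underS r \<alpha> \<Longrightarrow> level_ok X r Kb Hb \<beta>"
begin

abbreviation "U0 \<equiv> underS r \<alpha>"
abbreviation "Y \<equiv> (\<Union>\<beta>\<in>U0. Kb \<beta>)"
abbreviation "h \<equiv> lower_union r \<alpha> Hb"
abbreviation "BB \<equiv> bounds r \<alpha> Kb"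

lemma Kb_mono: "\<beta> \<in> U0 \<Longrightarrow> \<gamma> \<in> U0 \<Longrightarrow> (\<beta>, \<gamma>) \<in> r \<Longrightarrow> Kb \<beta> \<subseteq> Kb \<gamma>"
  using level_ok_K_mono[OF levels_ok] by blast

lemma Hb_mono: "\<beta> \<in> U0 \<Longrightarrow> \<gamma> \<in> U0 \<Longrightarrow> (\<beta>, \<gamma>) \<in> r \<Longrightarrow> Hb \<beta> S \<subseteq> Hb \<gamma> S"
  using level_ok_H_coherent[OF levels_ok, of \<gamma> \<beta> S] by blast

lemma Y_subset: "Y \<subseteq> K"
  using Kb_subset_K by blast

lemma lower_union_Int_Kb: "\<beta> \<in> U0 \<Longrightarrow> h S \<inter> Kb \<beta> = Hb \<beta> S"
proof -
  assume b: "\<beta> \<in> U0"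
  have "Hb \<gamma> S \<inter> Kb \<beta> \<subseteq> Hb \<beta> S" if g: "\<gamma> \<in> U0" for \<gamma>
  proof (cases "(\<beta>, \<gamma>) \<in> r")
    case True then show ?thesis using level_ok_H_coherent[OF levels_ok[OF g]] by blast
  next
    case False then have "(\<gamma>, \<beta>) \<in> r" using r_total by blast
    then show ?thesis using Hb_mono[OF g b] by blast
  qed
  moreover have "Hb \<beta> S \<subseteq> Kb \<beta>" using level_ok_H_subset[OF levels_ok[OF b]] .
  ultimately show ?thesis unfolding lower_union_def using b by blast
qed

lemma lower_union_subset: "h S \<subseteq> Y"
  unfolding lower_union_def using level_ok_H_subset[OF levels_ok] by blast

lemma Hb_diff: "\<beta> \<in> U0 \<Longrightarrow> Hb \<beta> (U0 - S) = Kb \<beta> - Hb \<beta> S"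
proof -
  assume b: "\<beta> \<in> U0"
  have "(U0 - S) \<inter> under r \<beta> = (- S) \<inter> under r \<beta>" using under_subset_underS[OF b] by blast
  then have "Hb \<beta> (U0 - S) = Hb \<beta> (- S)"
    using level_ok_H_restrict[OF levels_ok[OF b], of "U0 - S"]
      level_ok_H_restrict[OF levels_ok[OF b], of "- S"] by simp
  then show ?thesis using level_ok_H_compl[OF levels_ok[OF b]] by simp
qed

lemma lower_union_diff: "Y - h S = h (U0 - S)"
proof
  show "Y - h S \<subseteq> h (U0 - S)"
  proof
    fix x assume x: "x \<in> Y - h S"
    then obtain \<beta> where b: "\<beta> \<in> U0" "x \<in> Kb \<beta>" by blast
    then have "x \<notin> Hb \<beta> S" using x unfolding lower_union_def by blast
    then show "x \<in> h (U0 - S)" using Hb_diff[OF b(1)] b unfolding lower_union_def by blast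
  qed
next
  show "h (U0 - S) \<subseteq> Y - h S"
  proof
    fix x assume "x \<in> h (U0 - S)"
    then obtain \<beta> where b: "\<beta> \<in> U0" "x \<in> Hb \<beta> (U0 - S)" unfolding lower_union_def by blast
    then have x: "x \<in> Kb \<beta>" "x \<notin> Hb \<beta> S" using Hb_diff[OF b(1)] by auto
    then have "x \<notin> h S" using lower_union_Int_Kb[OF b(1), of S] by blast
    then show "x \<in> Y - h S" using x b by blast
  qed
qed

lemma lower_union_top: "h U0 = Y"
  using lower_union_diff[of "{}"] lower_union_subset[of "{}"]
    level_ok_H_disjoint[OF levels_ok, of _ "{}" "{}"] unfolding lower_union_def by auto

lemma lower_union_restrict: "h S = h (S \<inter> U0)"
proof -
  have "Hb \<beta> S = Hb \<beta> (S \<inter> U0)" if b: "\<beta> \<in> U0" for \<beta>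
  proof -
    have "S \<inter> U0 \<inter> under r \<beta> = S \<inter> under r \<beta>" using under_subset_underS[OF b] by blast
    then show ?thesis using level_ok_H_restrict[OF levels_ok[OF b]] by metis
  qed
  then show ?thesis unfolding lower_union_def by simp
qed

lemma bounds_cases:
  assumes "(B, L) \<in> BB"
  obtains "B = {}" "L = {}" | \<delta> where "\<delta> \<in> U0" "B = underS r \<delta>" "L = Kb \<delta>"
  using assms unfolding bounds_def by blast

lemma bounds_props: "(B, L) \<in> BB \<Longrightarrow> B \<subseteq> U0 \<and> clopenin X L \<and> L \<subseteq> K"
  by (erule bounds_cases)
    (use clopenin_empty level_ok_K_clopen[OF levels_ok] Kb_subset_K underS_trans in auto)

lemma bounds_upper:
  assumes "(B, L) \<in> BB" "(B', L') \<in> BB"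
  shows "\<exists>B'' L''. (B'', L'') \<in> BB \<and> B \<union> B' \<subseteq> B'' \<and> L'' \<subseteq> L \<union> L'"
  using assms(1)
proof (cases rule: bounds_cases)
  case (2 \<delta>)
  note d = this
  from assms(2) show ?thesis
  proof (cases rule: bounds_cases)
    case (2 \<delta>')
    show ?thesis
    proof (cases "(\<delta>, \<delta>') \<in> r")
      case True
      then show ?thesis using assms(2) d 2 underS_mono[OF True] by blast
    next
      case False
      then have "(\<delta>', \<delta>) \<in> r" using r_total by blast
      then show ?thesis using assms(1) d 2 underS_mono[of \<delta>' \<delta>] by blast
    qed
  qed (use assms(1) in blast)
qed (use assms(2) in blast)

lemma Hb_Int_bound:
  assumes m: "m \<in> U0" and b: "(B, L) \<in> BB" and st: "S \<inter> T \<inter> under r m \<subseteq> B"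
  shows "Hb m S \<inter> Hb m T \<subseteq> L"
  using b
proof (cases rule: bounds_cases)
  case 1
  then show ?thesis using level_ok_H_disjoint[OF levels_ok[OF m], of S T] st by blast
next
  case (2 \<delta>)
  show ?thesis
  proof (cases "\<delta> \<in> underS r m")
    case True
    then show ?thesis using level_ok_H_Int_below[OF levels_ok[OF m] True, of S T] st 2 by blast
  next
    case False
    then have "(m, \<delta>) \<in> r" using not_r_imp_underS by blast
    then show ?thesis using Kb_mono[OF m 2(1)] level_ok_H_subset[OF levels_ok[OF m]] 2 by blast
  qed
qed

lemma lower_union_Int_bound:
  assumes b: "(B, L) \<in> BB" and st: "S \<inter> T \<inter> U0 \<subseteq> B"
  shows "h S \<inter> h T \<subseteq> L"
proof
  fix x assume "x \<in> h S \<inter> h T"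
  then obtain \<beta> \<gamma> where bg: "\<beta> \<in> U0" "\<gamma> \<in> U0" "x \<in> Hb \<beta> S" "x \<in> Hb \<gamma> T"
    unfolding lower_union_def by blast
  obtain m where m: "m \<in> U0" "x \<in> Hb m S" "x \<in> Hb m T"
    using r_total[of \<beta> \<gamma>] Hb_mono[OF bg(1,2)] Hb_mono[OF bg(2,1)] bg by blast
  have "S \<inter> T \<inter> under r m \<subseteq> B" using st under_subset_underS[OF m(1)] by blast
  then show "x \<in> L" using Hb_Int_bound[OF m(1) b] m by blast
qed

abbreviation "C \<equiv> separators X r E \<alpha> K Kb Hb"
abbreviation "\<sigma> \<equiv> slice r E \<alpha>"
abbreviation "\<epsilon> \<equiv> signed K C"
abbreviation "P \<equiv> pieces r E \<alpha> K C"
abbreviation "FF \<equiv> constraints r E \<alpha> K Kb Hb C"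

text \<open>The invariant of the recursion defining the separators: \<open>C \<xi>\<close> represents the \<open>\<xi>\<close>-th slice,
  and any two slices up to \<open>\<xi>\<close> are represented with at most their permitted overlap.\<close>

definition separator_ok :: "'k \<Rightarrow> bool" where
  "separator_ok \<xi> \<longleftrightarrow> clopenin X (C \<xi>) \<and> C \<xi> \<subseteq> K \<and> C \<xi> \<inter> Y = h (\<sigma> \<xi> True) \<and>
     (\<forall>\<eta> s t B L. (\<eta>, \<xi>) \<in> r \<longrightarrow> (B, L) \<in> BB \<longrightarrow> \<sigma> \<xi> s \<inter> \<sigma> \<eta> t \<subseteq> B \<longrightarrow> \<epsilon> \<xi> s \<inter> \<epsilon> \<eta> t \<subseteq> L)"

lemma slice_subset: "\<sigma> \<xi> s \<subseteq> U0"
  unfolding slice_def by auto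

lemma slice_neg: "\<sigma> \<xi> (\<not> s) = U0 - \<sigma> \<xi> s"
  unfolding slice_def by auto

lemma signed_props:
  assumes "separator_ok \<xi>"
  shows "clopenin X (\<epsilon> \<xi> s)" "\<epsilon> \<xi> s \<subseteq> K" "\<epsilon> \<xi> (\<not> s) = K - \<epsilon> \<xi> s" "\<epsilon> \<xi> s \<inter> Y = h (\<sigma> \<xi> s)"
proof -
  have c: "clopenin X (C \<xi>)" "C \<xi> \<subseteq> K" "C \<xi> \<inter> Y = h (\<sigma> \<xi> True)"
    using assms unfolding separator_ok_def by auto
  show "clopenin X (\<epsilon> \<xi> s)" unfolding signed_def using c clopenin_diff[OF K_clopen c(1)] by simp
  show "\<epsilon> \<xi> s \<subseteq> K" unfolding signed_def using c by auto
  show "\<epsilon> \<xi> (\<not> s) = K - \<epsilon> \<xi> s" unfolding signed_def using c by auto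
  have "(K - C \<xi>) \<inter> Y = Y - h (\<sigma> \<xi> True)" using c Y_subset by blast
  also have "\<dots> = h (\<sigma> \<xi> False)" using lower_union_diff slice_neg[of \<xi> True] by simp
  finally show "\<epsilon> \<xi> s \<inter> Y = h (\<sigma> \<xi> s)" unfolding signed_def using c by (cases s) auto
qed

lemma signed_Int_bound:
  assumes "separator_ok \<eta>" "separator_ok \<eta>'" "(B, L) \<in> BB" "\<sigma> \<eta> t \<inter> \<sigma> \<eta>' t' \<subseteq> B"
  shows "\<epsilon> \<eta> t \<inter> \<epsilon> \<eta>' t' \<subseteq> L"
proof (cases "(\<eta>', \<eta>) \<in> r")
  case True
  then show ?thesis using assms(1,3,4) unfolding separator_ok_def by blast
next
  case False
  then have "(\<eta>, \<eta>') \<in> r" using r_total by blast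
  then show ?thesis using assms(2,3,4) unfolding separator_ok_def by blast
qed

lemma bounds_above_U0: "(B, L) \<in> BB \<Longrightarrow> U0 \<subseteq> B \<Longrightarrow> K = {}"
  by (erule bounds_cases) (use K_empty not_in_underS in blast)+

lemma pieces_cases:
  assumes "(T, G) \<in> P \<xi>"
  obtains (top) "T = U0" "G = K" | (slice) \<eta> t where "\<eta> \<in> underS r \<xi>" "T = \<sigma> \<eta> t" "G = \<epsilon> \<eta> t"
  using assms unfolding pieces_def by auto

lemma separators_unfold: "C \<xi> = separator_step X r E \<alpha> K Kb Hb (cut C (r - Id) \<xi>) \<xi>"
  unfolding separators_def by (rule wfrec[OF r_wf])

lemma constraints_cut: "constraints r E \<alpha> K Kb Hb (cut C (r - Id) \<xi>) \<xi> = FF \<xi>"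
proof -
  have "cut C (r - Id) \<xi> \<eta> = C \<eta>" if "\<eta> \<in> underS r \<xi>" for \<eta>
    using that by (simp add: cut_apply underS_iff)
  then have "pieces r E \<alpha> K (cut C (r - Id) \<xi>) \<xi> = P \<xi>"
    unfolding pieces_def signed_def by (intro arg_cong[of _ _ "insert _"] image_cong) auto
  then show ?thesis unfolding constraints_def by simp
qed

context
  fixes \<xi> :: 'k
  assumes IH: "\<And>\<eta>. \<eta> \<in> underS r \<xi> \<Longrightarrow> separator_ok \<eta>"
begin

lemma pieces_props:
  assumes "(T, G) \<in> P \<xi>"
  shows "T \<subseteq> U0" "clopenin X G" "G \<subseteq> K" "G \<inter> Y = h T"
proof -
  have "T \<subseteq> U0 \<and> clopenin X G \<and> G \<subseteq> K \<and> G \<inter> Y = h T"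
    using assms by (cases rule: pieces_cases)
      (use signed_props[OF IH] slice_subset K_clopen Y_subset lower_union_top in auto)
  then show "T \<subseteq> U0" "clopenin X G" "G \<subseteq> K" "G \<inter> Y = h T" by blast+
qed

lemma pieces_self_bound:
  assumes "(T, G) \<in> P \<xi>" "(B, L) \<in> BB" "T \<subseteq> B"
  shows "G \<subseteq> L"
  using assms(1)
proof (cases rule: pieces_cases)
  case top
  then show ?thesis using bounds_above_U0 assms(2,3) by blast
next
  case (slice \<eta> t)
  then show ?thesis using signed_Int_bound[OF IH[OF slice(1)] IH[OF slice(1)] assms(2), of t t] assms(3) by auto
qed

lemma pieces_Int_bound:
  assumes TG: "(T, G) \<in> P \<xi>" and TG': "(T', G') \<in> P \<xi>" and b: "(B, L) \<in> BB" and TT': "T \<inter> T' \<subseteq> B"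
  shows "G \<inter> G' \<subseteq> L"
  using TG
proof (cases rule: pieces_cases)
  case top
  then show ?thesis using pieces_self_bound[OF TG' b] pieces_props(1)[OF TG'] TT' by blast
next
  case (slice \<eta> t)
  note \<eta> = this
  from TG' show ?thesis
  proof (cases rule: pieces_cases)
    case top
    then show ?thesis using pieces_self_bound[OF TG b] pieces_props(1)[OF TG] TT' by blast
  next
    case (slice \<eta>' t')
    then show ?thesis using signed_Int_bound[OF IH[OF \<eta>(1)] IH[OF slice(1)] b] \<eta> TT' by blast
  qed
qed

lemma constraints_cases:
  assumes "A \<in> FF \<xi> S"
  obtains (lower) \<beta> where "\<beta> \<in> U0" "A = Hb \<beta> S"
  | (piece) T G B L where "(T, G) \<in> P \<xi>" "(B, L) \<in> BB" "T - S \<subseteq> B" "A = G - L"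
  using assms unfolding constraints_def by blast

lemma lower_piece_disjoint:
  assumes "\<beta> \<in> U0" "(T, G) \<in> P \<xi>" "(B, L) \<in> BB" "S \<inter> T \<subseteq> B"
  shows "Hb \<beta> S \<inter> (G - L) = {}"
proof -
  have "Hb \<beta> S \<subseteq> h S \<inter> Y" using assms(1) level_ok_H_subset[OF levels_ok]
    unfolding lower_union_def by blast
  moreover have "h S \<inter> h T \<subseteq> L"
    using lower_union_Int_bound[OF assms(3)] assms(4) by blast
  ultimately show ?thesis using pieces_props(4)[OF assms(2)] by blast
qed

lemma constraints_disjoint:
  assumes S: "S \<subseteq> U0"
  shows "\<Union>(FF \<xi> S) \<inter> \<Union>(FF \<xi> (U0 - S)) = {}"
proof -
  have "A \<inter> A' = {}" if A: "A \<in> FF \<xi> S" and A': "A' \<in> FF \<xi> (U0 - S)" for A A'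
    using A
  proof (cases rule: constraints_cases)
    case (lower \<beta>)
    from A' show ?thesis
    proof (cases rule: constraints_cases)
      case (lower \<gamma>)
      then show ?thesis using \<open>A = Hb \<beta> S\<close> \<open>\<beta> \<in> U0\<close>
          lower_union_Int_bound[OF bounds_empty, of S "U0 - S"] unfolding lower_union_def by blast
    next
      case (piece T G B L)
      then show ?thesis using lower lower_piece_disjoint[of \<beta> T G B L S] pieces_props(1) by blast
    qed
  next
    case (piece T G B L)
    note TG = this
    from A' show ?thesis
    proof (cases rule: constraints_cases)
      case (lower \<gamma>)
      then show ?thesis using TG lower_piece_disjoint[of \<gamma> T G B L "U0 - S"] by blast
    next
      case (piece T' G' B' L')
      obtain B'' L'' where m: "(B'', L'') \<in> BB" "B \<union> B' \<subseteq> B''" "L'' \<subseteq> L \<union> L'"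
        using bounds_upper[OF TG(2) piece(2)] by blast
      have "T \<inter> T' \<subseteq> B''" using TG(3) piece(3) pieces_props(1)[OF piece(1)] m(2) by blast
      then show ?thesis using pieces_Int_bound[OF TG(1) piece(1) m(1)] m(3) TG(4) piece(4) by blast
    qed
  qed
  then show ?thesis by blast
qed

lemma card_lt_bounds: "card_lt BB (UNIV :: 'k set)"
proof -
  have "card_lt ((\<lambda>\<beta>. (underS r \<beta>, Kb \<beta>)) ` U0) (UNIV :: 'k set)"
    by (rule card_lt_image[OF card_lt_underS[OF card]])
  moreover have "card_lt {({}, {}) :: 'k set \<times> 'a set} (UNIV :: 'k set)"
    by (rule card_lt_finite[OF inf]) simp
  moreover have "BB = {({}, {})} \<union> (\<lambda>\<beta>. (underS r \<beta>, Kb \<beta>)) ` U0"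
    unfolding bounds_def by blast
  ultimately show ?thesis using card_lt_Un[OF inf] by metis
qed

lemma card_lt_pieces: "card_lt (P \<xi>) (UNIV :: 'k set)"
proof -
  have "card_lt (underS r \<xi> \<times> (UNIV :: bool set)) (UNIV :: 'k set)"
    by (rule card_lt_Times[OF inf card_lt_underS[OF card] card_lt_finite[OF inf]]) simp
  then have "card_lt ((\<lambda>(\<eta>, t). (\<sigma> \<eta> t, \<epsilon> \<eta> t)) ` (underS r \<xi> \<times> UNIV)) (UNIV :: 'k set)"
    by (rule card_lt_image)
  then show ?thesis unfolding pieces_def insert_def
    by (rule card_lt_Un[OF inf card_lt_finite[OF inf], rotated]) simp
qed

lemma card_lt_constraints: "card_lt (FF \<xi> S) (UNIV :: 'k set)"
proof -
  have "card_lt (P \<xi> \<times> BB) (UNIV :: 'k set)"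
    by (rule card_lt_Times[OF inf card_lt_pieces card_lt_bounds])
  then have "card_lt ((\<lambda>((T, G), (B, L)). G - L) ` (P \<xi> \<times> BB)) (UNIV :: 'k set)"
    by (rule card_lt_image)
  moreover have "{G - L | T G B L. (T, G) \<in> P \<xi> \<and> (B, L) \<in> BB \<and> T - S \<subseteq> B}
      \<subseteq> (\<lambda>((T, G), (B, L)). G - L) ` (P \<xi> \<times> BB)" by force
  ultimately show ?thesis unfolding constraints_def
    by (intro card_lt_Un[OF inf] card_lt_image[OF card_lt_underS[OF card]]) (rule card_lt_subset)
qed

lemma constraints_clopen: "A \<in> FF \<xi> S \<Longrightarrow> clopenin X A"
  by (erule constraints_cases)
    (use level_ok_H_clopen[OF levels_ok] clopenin_diff pieces_props(2) bounds_props in blast)+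

lemma lower_union_subset_constraints: "h S \<subseteq> \<Union>(FF \<xi> S)"
  unfolding constraints_def lower_union_def by blast

lemma separator_eq:
  obtains D where "clopenin X D" "\<Union>(FF \<xi> (\<sigma> \<xi> True)) \<subseteq> D" "D \<inter> \<Union>(FF \<xi> (\<sigma> \<xi> False)) = {}"
    "C \<xi> = K \<inter> D"
proof -
  let ?\<F> = "FF \<xi> (\<sigma> \<xi> True) \<union> FF \<xi> (\<sigma> \<xi> False)"
  let ?sep = "\<lambda>D. clopenin X D \<and> \<Union>(FF \<xi> (\<sigma> \<xi> True)) \<subseteq> D \<and> D \<inter> \<Union>(FF \<xi> (\<sigma> \<xi> False)) = {}"
  have members: "\<forall>A\<in>?\<F>. clopenin X A" using constraints_clopen by blast
  have opens: "openin X (\<Union>(FF \<xi> S))" for S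
    using constraints_clopen unfolding clopenin_def by (intro openin_Union) blast
  have disjoint: "\<Union>(FF \<xi> (\<sigma> \<xi> True)) \<inter> \<Union>(FF \<xi> (\<sigma> \<xi> False)) = {}"
    using constraints_disjoint[OF slice_subset] slice_neg[of \<xi> True] by simp
  have card: "card_lt ?\<F> (UNIV :: 'k set)"
    by (rule card_lt_Un[OF inf card_lt_constraints card_lt_constraints])
  have "\<Union>(FF \<xi> (\<sigma> \<xi> True)) \<union> \<Union>(FF \<xi> (\<sigma> \<xi> False)) = \<Union>?\<F>" by blast
  then have "\<exists>D. ?sep D"
    by (rule F_kappa_clopen_separation[OF compact F_kappa members card opens opens disjoint])
  then have "?sep (SOME D. ?sep D)" by (rule someI_ex[of ?sep])
  moreover have "C \<xi> = K \<inter> (SOME D. ?sep D)"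
    by (subst separators_unfold) (simp only: separator_step_def constraints_cut)
  ultimately show thesis using that[of "SOME D. ?sep D"] by blast
qed

text \<open>Which side of the \<open>\<xi>\<close>-th separator a piece \<open>G - L\<close> lies on is decided by the constraints.\<close>

lemma signed_pieces_bound:
  assumes TG: "(T, G) \<in> P \<xi>" and b: "(B, L) \<in> BB" and st: "\<sigma> \<xi> s \<inter> T \<subseteq> B"
  shows "\<epsilon> \<xi> s \<inter> G \<subseteq> L"
proof -
  obtain D where D: "clopenin X D" "\<Union>(FF \<xi> (\<sigma> \<xi> True)) \<subseteq> D"
    "D \<inter> \<Union>(FF \<xi> (\<sigma> \<xi> False)) = {}" "C \<xi> = K \<inter> D"
    by (rule separator_eq)
  have T: "T \<subseteq> U0" "G \<subseteq> K" using pieces_props[OF TG] by auto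
  have "T - \<sigma> \<xi> (\<not> s) \<subseteq> B" using st T(1) slice_neg[of \<xi> s] by blast
  then have "G - L \<in> FF \<xi> (\<sigma> \<xi> (\<not> s))" unfolding constraints_def using TG b by blast
  then show ?thesis using D(2-4) T(2) unfolding signed_def by (cases s) auto
qed

lemma separator_ok_step: "separator_ok \<xi>"
proof -
  obtain D where D: "clopenin X D" "\<Union>(FF \<xi> (\<sigma> \<xi> True)) \<subseteq> D" "D \<inter> \<Union>(FF \<xi> (\<sigma> \<xi> False)) = {}"
    "C \<xi> = K \<inter> D"
    by (rule separator_eq)
  have "C \<xi> \<inter> Y = h (\<sigma> \<xi> True)"
  proof
    have "h (\<sigma> \<xi> True) \<subseteq> D" using D(2) lower_union_subset_constraints by blast
    then show "h (\<sigma> \<xi> True) \<subseteq> C \<xi> \<inter> Y" using D(4) lower_union_subset Y_subset by blast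
  next
    have "h (\<sigma> \<xi> False) \<inter> D = {}" using D(3) lower_union_subset_constraints by blast
    then show "C \<xi> \<inter> Y \<subseteq> h (\<sigma> \<xi> True)"
      using D(4) lower_union_diff[of "\<sigma> \<xi> True"] slice_neg[of \<xi> True] by auto
  qed
  moreover have "\<epsilon> \<xi> s \<inter> \<epsilon> \<eta> t \<subseteq> L"
    if "(\<eta>, \<xi>) \<in> r" "(B, L) \<in> BB" "\<sigma> \<xi> s \<inter> \<sigma> \<eta> t \<subseteq> B" for \<eta> s t B L
  proof (cases "\<eta> = \<xi>")
    case False
    then have "(\<eta>, t) \<in> underS r \<xi> \<times> UNIV" using that(1) underS_iff by blast
    then have "(\<sigma> \<eta> t, \<epsilon> \<eta> t) \<in> P \<xi>" unfolding pieces_def by force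
    then show ?thesis using signed_pieces_bound that(2,3) by blast
  next
    case True
    have "(U0, K) \<in> P \<xi>" unfolding pieces_def by blast
    then have "\<epsilon> \<xi> s \<inter> K \<subseteq> L" if "s = t"
      using signed_pieces_bound \<open>(B, L) \<in> BB\<close> \<open>\<sigma> \<xi> s \<inter> \<sigma> \<eta> t \<subseteq> B\<close> True that by blast
    then show ?thesis using True D(4) unfolding signed_def by auto
  qed
  moreover have "clopenin X (C \<xi>)" "C \<xi> \<subseteq> K" using D(4) clopenin_Int[OF K_clopen D(1)] by auto
  ultimately show ?thesis unfolding separator_ok_def by blast
qed

end

lemma separator_ok_all: "separator_ok \<xi>"
  using r_wf
proof (induction \<xi> rule: wf_induct_rule)
  case (less \<xi>)
  then show ?case by (rule separator_ok_step) (auto simp: underS_iff)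
qed

abbreviation "e \<equiv> extension X r E \<alpha> K Kb Hb"

lemma signed_cong: "\<sigma> \<xi> s = \<sigma> \<eta> t \<Longrightarrow> \<epsilon> \<xi> s = \<epsilon> \<eta> t"
proof -
  have le: "\<epsilon> \<xi> s \<subseteq> \<epsilon> \<eta> t" if "\<sigma> \<xi> s = \<sigma> \<eta> t" for \<xi> s \<eta> t
  proof -
    have "\<sigma> \<xi> s \<inter> \<sigma> \<eta> (\<not> t) \<subseteq> {}" using that slice_neg[of \<eta> t] by blast
    then have "\<epsilon> \<xi> s \<inter> \<epsilon> \<eta> (\<not> t) \<subseteq> {}"
      using signed_Int_bound[OF separator_ok_all separator_ok_all bounds_empty] by blast
    then show ?thesis using signed_props(2,3)[OF separator_ok_all] by blast
  qed
  show "\<sigma> \<xi> s = \<sigma> \<eta> t \<Longrightarrow> \<epsilon> \<xi> s = \<epsilon> \<eta> t" using le le[OF sym] by blast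
qed

lemma slice_exists: "\<exists>\<xi> s. \<sigma> \<xi> s = S \<inter> U0"
  using E_enum[of "S \<inter> U0"] unfolding slice_def by (metis Int_absorb2 inf_le2)

lemma extension_eq_signed: "\<sigma> \<xi> s = S \<inter> U0 \<Longrightarrow> e S = \<epsilon> \<xi> s"
  unfolding extension_def Let_def
  using someI_ex[of "\<lambda>z. \<sigma> (fst z) (snd z) = S \<inter> U0"] slice_exists signed_cong by auto

lemma extension_clopen: "clopenin X (e S)"
  using slice_exists extension_eq_signed signed_props(1)[OF separator_ok_all] by metis

lemma extension_restrict: "e S = e (S \<inter> U0)"
  using slice_exists[of S] extension_eq_signed by (metis inf.right_idem)

lemma extension_compl: "e (- S) = K - e S"
proof -
  obtain \<xi> s where p: "\<sigma> \<xi> s = S \<inter> U0" using slice_exists by blast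
  then have "\<sigma> \<xi> (\<not> s) = - S \<inter> U0" using slice_neg[of \<xi> s] by blast
  then show ?thesis
    using extension_eq_signed p signed_props(3)[OF separator_ok_all] by metis
qed

lemma extension_Int_Kb: "\<beta> \<in> U0 \<Longrightarrow> e S \<inter> Kb \<beta> = Hb \<beta> S"
proof -
  assume b: "\<beta> \<in> U0"
  obtain \<xi> s where p: "\<sigma> \<xi> s = S \<inter> U0" using slice_exists by blast
  have "e S \<inter> Y = h S"
    using extension_eq_signed[OF p] signed_props(4)[OF separator_ok_all, of \<xi> s] p
      lower_union_restrict[of S] by simp
  then have "e S \<inter> Kb \<beta> = h S \<inter> Kb \<beta>" using b by blast
  then show ?thesis using lower_union_Int_Kb[OF b] by simp
qed

lemma extension_Int_bound: "(B, L) \<in> BB \<Longrightarrow> S \<inter> T \<inter> U0 \<subseteq> B \<Longrightarrow> e S \<inter> e T \<subseteq> L"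
proof -
  assume b: "(B, L) \<in> BB" and st: "S \<inter> T \<inter> U0 \<subseteq> B"
  obtain \<xi> s where p: "\<sigma> \<xi> s = S \<inter> U0" using slice_exists by blast
  obtain \<eta> t where q: "\<sigma> \<eta> t = T \<inter> U0" using slice_exists by blast
  have "\<sigma> \<xi> s \<inter> \<sigma> \<eta> t \<subseteq> B" using p q st by blast
  then have "\<epsilon> \<xi> s \<inter> \<epsilon> \<eta> t \<subseteq> L" using signed_Int_bound[OF separator_ok_all separator_ok_all b] by blast
  then show ?thesis using extension_eq_signed[OF p] extension_eq_signed[OF q] by simp
qed

end

lemma (in kappa_order) level_ok_extend:
  assumes K_\<alpha>: "K \<alpha> = K' \<union> N" and H_\<alpha>: "\<And>S. H \<alpha> S = e S \<union> (if \<alpha> \<in> S then N else {})"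
    and K'_clopen: "clopenin X K'" and N_clopen: "clopenin X N" and K'_N: "K' \<inter> N = {}"
    and K_below: "\<And>\<beta>. \<beta> \<in> underS r \<alpha> \<Longrightarrow> K \<beta> \<subseteq> K'"
    and e_clopen: "\<And>S. clopenin X (e S)" and e_subset: "\<And>S. e S \<subseteq> K'"
    and e_restrict: "\<And>S. e S = e (S \<inter> underS r \<alpha>)" and e_compl: "\<And>S. e (- S) = K' - e S"
    and e_coherent: "\<And>S \<beta>. \<beta> \<in> underS r \<alpha> \<Longrightarrow> e S \<inter> K \<beta> = H \<beta> S"
    and e_Int_bound: "\<And>S T B L. (B, L) \<in> bounds r \<alpha> K \<Longrightarrow> S \<inter> T \<inter> underS r \<alpha> \<subseteq> B \<Longrightarrow> e S \<inter> e T \<subseteq> L"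
  shows "level_ok X r K H \<alpha>"
proof -
  have \<alpha>_under: "\<alpha> \<in> under r \<alpha>" using r_refl under_iff by blast
  have underS_under: "underS r \<alpha> \<subseteq> under r \<alpha>" unfolding underS_def under_def by blast
  have e_N: "e S \<inter> N = {}" for S using e_subset K'_N by blast
  have H_Int: "H \<alpha> S \<inter> H \<alpha> T = e S \<inter> e T \<union> (if \<alpha> \<in> S \<inter> T then N else {})" for S T
    unfolding H_\<alpha> using e_N by auto
  have below_K: "(\<beta>, \<alpha>) \<in> r \<Longrightarrow> \<beta> \<noteq> \<alpha> \<Longrightarrow> \<beta> \<in> underS r \<alpha>" for \<beta> using underS_iff by blast
  have "H \<alpha> (- S) = K \<alpha> - H \<alpha> S" for S
    unfolding H_\<alpha> K_\<alpha> e_compl using e_subset[of S] K'_N by (cases "\<alpha> \<in> S") auto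
  moreover have "H \<alpha> S = H \<alpha> (S \<inter> under r \<alpha>)" for S
  proof -
    have "e (S \<inter> under r \<alpha>) = e (S \<inter> under r \<alpha> \<inter> underS r \<alpha>)" by (rule e_restrict)
    also have "S \<inter> under r \<alpha> \<inter> underS r \<alpha> = S \<inter> underS r \<alpha>" using underS_under by blast
    also have "e (S \<inter> underS r \<alpha>) = e S" by (rule e_restrict[symmetric])
    finally show ?thesis unfolding H_\<alpha> using \<alpha>_under by simp
  qed
  moreover have "H \<alpha> S \<inter> K \<beta> = H \<beta> S" if "(\<beta>, \<alpha>) \<in> r" for S \<beta>
  proof (cases "\<beta> = \<alpha>")
    case True
    show ?thesis using e_subset[of S] by (auto simp: True H_\<alpha> K_\<alpha>)
  next
    case False
    then have \<beta>: "\<beta> \<in> underS r \<alpha>" using below_K that by blast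
    have "N \<inter> K \<beta> = {}" using K_below[OF \<beta>] K'_N by blast
    moreover have "e S \<inter> K \<beta> = H \<beta> S" by (rule e_coherent[OF \<beta>])
    ultimately show ?thesis unfolding H_\<alpha> by auto
  qed
  moreover have "H \<alpha> S \<inter> H \<alpha> T = {}" if "S \<inter> T \<inter> under r \<alpha> = {}" for S T
  proof -
    have "e S \<inter> e T \<subseteq> {}" using e_Int_bound[OF bounds_empty] that underS_under by blast
    then show ?thesis using H_Int that \<alpha>_under by auto
  qed
  moreover have "H \<alpha> S \<inter> H \<alpha> T \<subseteq> K \<gamma>"
    if \<gamma>: "\<gamma> \<in> underS r \<alpha>" and ST: "S \<inter> T \<inter> under r \<alpha> \<subseteq> underS r \<gamma>" for S T \<gamma>
  proof -
    have "e S \<inter> e T \<subseteq> K \<gamma>" using e_Int_bound[OF underS_in_bounds[OF \<gamma>]] ST underS_under by blast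
    moreover have "\<alpha> \<notin> underS r \<gamma>" using \<gamma> r_antisym unfolding underS_def by blast
    ultimately show ?thesis using H_Int ST \<alpha>_under by auto
  qed
  moreover have "K \<beta> \<subseteq> K \<alpha>" if "(\<beta>, \<alpha>) \<in> r" for \<beta>
    using K_below[OF below_K[OF that]] K_\<alpha> by (cases "\<beta> = \<alpha>") auto
  moreover have "clopenin X (H \<alpha> S) \<and> H \<alpha> S \<subseteq> K \<alpha>" for S
    unfolding H_\<alpha> K_\<alpha> using clopenin_Un[OF e_clopen N_clopen] e_clopen e_subset by auto
  ultimately show ?thesis
    unfolding level_ok_def using clopenin_Un[OF K'_clopen N_clopen] K_\<alpha> by simp
qed

section \<open>The tower of levels\<close>

lemma kappa_Parovicenko_closedin_singleton:
  assumes "kappa_Parovicenko K X" "x \<in> topspace X"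
  shows "closedin X {x}"
proof -
  have "Hausdorff_space X" using assms(1) unfolding kappa_Parovicenko_def by blast
  then have "t1_space X" by (rule Hausdorff_imp_t1_space)
  then show ?thesis using assms(2) unfolding t1_space_closedin_singleton by blast
qed

definition point_nbhd :: "'a topology \<Rightarrow> 'k rel \<Rightarrow> 'a \<Rightarrow> 'k \<Rightarrow> ('k \<Rightarrow> 'a set) \<Rightarrow> 'a set" where
  "point_nbhd X r p \<alpha> K = (if underS r \<alpha> = {} then topspace X
     else SOME W. clopenin X W \<and> p \<in> W \<and> W \<inter> (\<Union>\<beta>\<in>underS r \<alpha>. K \<beta>) = {})"

definition fresh_clopen :: "'a topology \<Rightarrow> 'a \<Rightarrow> 'a set \<Rightarrow> 'a set" where
  "fresh_clopen X p W = (SOME N. clopenin X N \<and> N \<noteq> {} \<and> p \<notin> N \<and> N \<subseteq> W)"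

text \<open>The new index \<open>\<alpha>\<close> is sent onto \<open>N\<close>, which also absorbs \<open>V \<alpha> \<inter> W\<close> so that the
  levels exhaust \<open>X - {p}\<close>.\<close>

definition stage_step :: "'a topology \<Rightarrow> 'k rel \<Rightarrow> 'a \<Rightarrow> ('k \<Rightarrow> 'a set) \<Rightarrow> ('k \<Rightarrow> 'k set) \<Rightarrow>
    ('k \<Rightarrow> 'a set \<times> ('k set \<Rightarrow> 'a set)) \<Rightarrow> 'k \<Rightarrow> 'a set \<times> ('k set \<Rightarrow> 'a set)" where
  "stage_step X r p V E prev \<alpha> =
    (let K = (\<lambda>\<beta>. fst (prev \<beta>)); H = (\<lambda>\<beta>. snd (prev \<beta>)); W = point_nbhd X r p \<alpha> K;
         K' = topspace X - W; N = W \<inter> (V \<alpha> \<union> fresh_clopen X p W)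
     in (K' \<union> N, \<lambda>S. extension X r E \<alpha> K' K H S \<union> (if \<alpha> \<in> S then N else {})))"

definition stages :: "'a topology \<Rightarrow> 'k rel \<Rightarrow> 'a \<Rightarrow> ('k \<Rightarrow> 'a set) \<Rightarrow> ('k \<Rightarrow> 'k set) \<Rightarrow>
    'k \<Rightarrow> 'a set \<times> ('k set \<Rightarrow> 'a set)" where
  "stages X r p V E = wfrec (r - Id) (stage_step X r p V E)"

lemma point_nbhd_cong:
  "(\<And>\<beta>. \<beta> \<in> underS r \<alpha> \<Longrightarrow> K \<beta> = K' \<beta>) \<Longrightarrow> point_nbhd X r p \<alpha> K = point_nbhd X r p \<alpha> K'"
  unfolding point_nbhd_def by simp

lemma stage_step_cong:
  assumes "\<And>\<beta>. \<beta> \<in> underS r \<alpha> \<Longrightarrow> prev \<beta> = prev' \<beta>"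
  shows "stage_step X r p V E prev \<alpha> = stage_step X r p V E prev' \<alpha>"
proof -
  have W: "point_nbhd X r p \<alpha> (\<lambda>\<beta>. fst (prev \<beta>)) = point_nbhd X r p \<alpha> (\<lambda>\<beta>. fst (prev' \<beta>))"
    using assms by (intro point_nbhd_cong) simp
  have e: "extension X r E \<alpha> K (\<lambda>\<beta>. fst (prev \<beta>)) (\<lambda>\<beta>. snd (prev \<beta>))
      = extension X r E \<alpha> K (\<lambda>\<beta>. fst (prev' \<beta>)) (\<lambda>\<beta>. snd (prev' \<beta>))" for K
    using assms by (intro extension_cong) simp_all
  show ?thesis unfolding stage_step_def Let_def W e ..
qed

lemma fresh_clopen_props:
  assumes X: "kappa_Parovicenko K X" and p: "p \<in> topspace X" and W: "clopenin X W" "p \<in> W"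
  shows "clopenin X (fresh_clopen X p W) \<and> fresh_clopen X p W \<noteq> {} \<and>
    p \<notin> fresh_clopen X p W \<and> fresh_clopen X p W \<subseteq> W"
proof -
  have zd: "zero_dimensional X" and not_open: "\<not> openin X {p}"
    using X p unfolding kappa_Parovicenko_def by blast+
  have open_W: "openin X (W - {p})"
    using W(1) kappa_Parovicenko_closedin_singleton[OF X p] unfolding clopenin_def by blast
  have "W \<noteq> {p}" using W(1) not_open unfolding clopenin_def by blast
  then obtain q where "q \<in> W - {p}" using W(2) by blast
  then obtain C where "clopenin X C" "q \<in> C" "C \<subseteq> W - {p}"
    using zero_dimensional_clopen_nbhd[OF zd open_W] by blast
  then have "\<exists>N. clopenin X N \<and> N \<noteq> {} \<and> p \<notin> N \<and> N \<subseteq> W" by blast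
  from someI_ex[OF this] show ?thesis unfolding fresh_clopen_def .
qed

locale tower = kappa_order r for r :: "'k rel" +
  fixes X :: "'a topology" and p :: 'a and V :: "'k \<Rightarrow> 'a set" and E :: "'k \<Rightarrow> 'k set"
  assumes Parovicenko: "kappa_Parovicenko (UNIV :: 'k set) X"
    and P_point: "P_kappa_point (UNIV :: 'k set) X p"
    and V_clopen: "\<And>\<alpha>. clopenin X (V \<alpha>)" and p_notin_V: "\<And>\<alpha>. p \<notin> V \<alpha>"
    and V_cover: "topspace X - {p} \<subseteq> (\<Union>\<alpha>. V \<alpha>)"
    and E_enum: "\<And>\<alpha> S. S \<subseteq> underS r \<alpha> \<Longrightarrow> \<exists>\<xi>. E \<xi> = S"
begin

abbreviation "KK \<equiv> \<lambda>\<alpha>. fst (stages X r p V E \<alpha>)"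
abbreviation "HH \<equiv> \<lambda>\<alpha>. snd (stages X r p V E \<alpha>)"
abbreviation "W \<equiv> \<lambda>\<alpha>. point_nbhd X r p \<alpha> KK"
abbreviation "N \<equiv> \<lambda>\<alpha>. W \<alpha> \<inter> (V \<alpha> \<union> fresh_clopen X p (W \<alpha>))"

lemma compact: "compact_space X"
  using Parovicenko unfolding kappa_Parovicenko_def by blast

lemma F_kappa: "F_kappa_space (UNIV :: 'k set) X"
  using Parovicenko unfolding kappa_Parovicenko_def by blast

lemma zero_dim: "zero_dimensional X"
  using Parovicenko unfolding kappa_Parovicenko_def by blast

lemma p_in_topspace: "p \<in> topspace X"
  using P_point unfolding P_kappa_point_def by blast

lemma stages_eq: "stages X r p V E \<alpha> = (topspace X - W \<alpha> \<union> N \<alpha>,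
    \<lambda>S. extension X r E \<alpha> (topspace X - W \<alpha>) KK HH S \<union> (if \<alpha> \<in> S then N \<alpha> else {}))"
proof -
  have "stages X r p V E \<alpha> = stage_step X r p V E (cut (stages X r p V E) (r - Id) \<alpha>) \<alpha>"
    unfolding stages_def by (rule wfrec[OF r_wf])
  also have "\<dots> = stage_step X r p V E (stages X r p V E) \<alpha>"
    by (rule stage_step_cong) (simp add: cut_apply underS_iff)
  finally show ?thesis unfolding stage_step_def Let_def .
qed

definition stage_ok :: "'k \<Rightarrow> bool" where
  "stage_ok \<alpha> \<longleftrightarrow> level_ok X r KK HH \<alpha> \<and> p \<notin> KK \<alpha> \<and> V \<alpha> \<subseteq> KK \<alpha> \<and> HH \<alpha> {\<alpha>} \<noteq> {}"

lemma point_nbhd_props: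
  assumes IH: "\<And>\<beta>. \<beta> \<in> underS r \<alpha> \<Longrightarrow> stage_ok \<beta>"
  shows "clopenin X (W \<alpha>) \<and> p \<in> W \<alpha> \<and> W \<alpha> \<inter> (\<Union>\<beta>\<in>underS r \<alpha>. KK \<beta>) = {}"
proof (cases "underS r \<alpha> = {}")
  case True
  then show ?thesis unfolding point_nbhd_def using p_in_topspace clopenin_topspace by simp
next
  case False
  let ?\<N> = "(\<lambda>\<beta>. topspace X - KK \<beta>) ` underS r \<alpha>"
  have nbhds: "\<forall>M\<in>?\<N>. clopenin X M \<and> p \<in> M"
  proof
    fix M assume "M \<in> ?\<N>"
    then obtain \<beta> where \<beta>: "\<beta> \<in> underS r \<alpha>" "M = topspace X - KK \<beta>" by blast
    then have lv: "level_ok X r KK HH \<beta>" and "p \<notin> KK \<beta>" using IH unfolding stage_ok_def by blast+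
    then show "clopenin X M \<and> p \<in> M"
      using \<beta>(2) p_in_topspace clopenin_diff[OF clopenin_topspace level_ok_K_clopen[OF lv]] by blast
  qed
  have "card_lt ?\<N> (UNIV :: 'k set)" by (rule card_lt_image[OF card_lt_underS[OF card]])
  then obtain W0 where W0: "clopenin X W0" "p \<in> W0" "W0 \<subseteq> \<Inter>?\<N>"
    using P_kappa_point_clopen_nbhd[OF zero_dim P_point nbhds] by blast
  have "W0 \<inter> (\<Union>\<beta>\<in>underS r \<alpha>. KK \<beta>) = {}" using W0(3) by blast
  then have "\<exists>W. clopenin X W \<and> p \<in> W \<and> W \<inter> (\<Union>\<beta>\<in>underS r \<alpha>. KK \<beta>) = {}"
    using W0(1,2) by blast
  from someI_ex[OF this] show ?thesis unfolding point_nbhd_def using False by simp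
qed


lemma stage_ok_step:
  assumes IH: "\<And>\<beta>. \<beta> \<in> underS r \<alpha> \<Longrightarrow> stage_ok \<beta>"
  shows "stage_ok \<alpha>"
proof -
  let ?K' = "topspace X - W \<alpha>" and ?F = "fresh_clopen X p (W \<alpha>)"
  have W: "clopenin X (W \<alpha>)" "p \<in> W \<alpha>" "W \<alpha> \<inter> (\<Union>\<beta>\<in>underS r \<alpha>. KK \<beta>) = {}"
    using point_nbhd_props[OF IH] by blast+
  have F: "clopenin X ?F" "?F \<noteq> {}" "p \<notin> ?F" "?F \<subseteq> W \<alpha>"
    using fresh_clopen_props[OF Parovicenko p_in_topspace W(1,2)] by blast+
  have K'_clopen: "clopenin X ?K'" by (rule clopenin_diff[OF clopenin_topspace W(1)])
  have N_clopen: "clopenin X (N \<alpha>)" by (rule clopenin_Int[OF W(1) clopenin_Un[OF V_clopen F(1)]])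
  have levels: "level_ok X r KK HH \<beta>" if "\<beta> \<in> underS r \<alpha>" for \<beta>
    using IH[OF that] unfolding stage_ok_def by blast
  have below: "KK \<beta> \<subseteq> ?K'" if "\<beta> \<in> underS r \<alpha>" for \<beta>
    using W(3) that clopenin_subset[OF level_ok_K_clopen[OF levels[OF that]]] by blast
  interpret ext: extension_step r X E \<alpha> ?K' KK HH
  proof
    show "?K' = {}" if "underS r \<alpha> = {}" using that unfolding point_nbhd_def by simp
  qed (use compact F_kappa E_enum K'_clopen below levels in auto)
  have "level_ok X r KK HH \<alpha>"
  proof (rule level_ok_extend)
    show "KK \<alpha> = ?K' \<union> N \<alpha>" "HH \<alpha> S = ext.e S \<union> (if \<alpha> \<in> S then N \<alpha> else {})" for S
      using stages_eq[of \<alpha>] by simp_all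
    show "ext.e S \<subseteq> ?K'" for S by (rule extension_subset)
  qed (use K'_clopen N_clopen below ext.extension_clopen ext.extension_restrict
      ext.extension_compl ext.extension_Int_Kb ext.extension_Int_bound in auto)
  moreover have "p \<notin> KK \<alpha>" using stages_eq[of \<alpha>] W(2) F(3) p_notin_V by auto
  moreover have "V \<alpha> \<subseteq> KK \<alpha>" using stages_eq[of \<alpha>] clopenin_subset[OF V_clopen] by auto
  moreover have "HH \<alpha> {\<alpha>} \<noteq> {}" using stages_eq[of \<alpha>] F(2,4) by auto
  ultimately show ?thesis unfolding stage_ok_def by blast
qed

lemma stage_ok_all: "stage_ok \<alpha>"
  using r_wf
proof (induction \<alpha> rule: wf_induct_rule)
  case (less \<alpha>)
  then show ?case by (rule stage_ok_step) (auto simp: underS_iff)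
qed

lemma levels_ok: "level_ok X r KK HH \<alpha>"
  and p_notin_KK: "p \<notin> KK \<alpha>"
  and V_subset_KK: "V \<alpha> \<subseteq> KK \<alpha>"
  and HH_singleton_nonempty: "HH \<alpha> {\<alpha>} \<noteq> {}"
  using stage_ok_all[of \<alpha>] unfolding stage_ok_def by blast+

lemma KK_mono: "(\<beta>, \<alpha>) \<in> r \<Longrightarrow> KK \<beta> \<subseteq> KK \<alpha>"
  by (rule level_ok_K_mono[OF levels_ok])

lemma HH_mono_level: "(\<beta>, \<alpha>) \<in> r \<Longrightarrow> HH \<beta> S \<subseteq> HH \<alpha> S"
  using level_ok_H_coherent[OF levels_ok] by blast

lemma HH_mono: "S \<subseteq> S' \<Longrightarrow> HH \<alpha> S \<subseteq> HH \<alpha> S'"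
proof -
  assume "S \<subseteq> S'"
  then have "HH \<alpha> S \<inter> HH \<alpha> (- S') = {}" by (intro level_ok_H_disjoint[OF levels_ok]) blast
  then show ?thesis using level_ok_H_compl[OF levels_ok, of \<alpha> S'] level_ok_H_subset[OF levels_ok, of \<alpha> S] by blast
qed

lemma HH_common_level: "x \<in> HH \<alpha> S \<Longrightarrow> x \<in> HH \<gamma> S' \<Longrightarrow> \<exists>m. x \<in> HH m S \<and> x \<in> HH m S'"
  using common_upper_bound[of \<alpha> \<gamma>] HH_mono_level by blast

lemma KK_subset: "KK \<alpha> \<subseteq> topspace X - {p}"
  using clopenin_subset[OF level_ok_K_clopen[OF levels_ok]] p_notin_KK by blast

lemma KK_cover: "topspace X - {p} \<subseteq> (\<Union>\<alpha>. KK \<alpha>)"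
  using V_cover V_subset_KK by blast

lemma finite_KK_bound: "finite \<K> \<Longrightarrow> \<K> \<subseteq> range KK \<Longrightarrow> \<exists>\<delta>. \<Union>\<K> \<subseteq> KK \<delta>"
proof (induction \<K> rule: finite_induct)
  case (insert L \<K>)
  have "\<K> \<subseteq> range KK" using insert.prems by blast
  from insert.IH[OF this] obtain \<delta> where \<delta>: "\<Union>\<K> \<subseteq> KK \<delta>" ..
  obtain \<alpha> where \<alpha>: "L = KK \<alpha>" using insert.prems by blast
  obtain m where "(\<alpha>, m) \<in> r" "(\<delta>, m) \<in> r" using common_upper_bound by blast
  then have "L \<union> \<Union>\<K> \<subseteq> KK m" using \<alpha> \<delta> KK_mono by blast
  then show ?case by auto
qed simp

definition family :: "('k \<Rightarrow> bool) \<Rightarrow> 'a set" where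
  "family f = (\<Union>\<alpha>. HH \<alpha> {\<beta>. f \<beta>})"

lemma family_subset: "family f \<subseteq> topspace X - {p}"
  unfolding family_def using level_ok_H_subset[OF levels_ok] KK_subset by blast

lemma family_open: "openin X (family f)"
  unfolding family_def using level_ok_H_clopen[OF levels_ok] unfolding clopenin_def by blast

lemma family_cover: "topspace X - {p} \<subseteq> family f \<union> family (\<lambda>\<beta>. \<not> f \<beta>)"
proof
  fix x assume "x \<in> topspace X - {p}"
  then obtain \<alpha> where x: "x \<in> KK \<alpha>" using KK_cover by blast
  have "{\<beta>. \<not> f \<beta>} = - {\<beta>. f \<beta>}" by blast
  then have "x \<in> HH \<alpha> {\<beta>. f \<beta>} \<or> x \<in> HH \<alpha> {\<beta>. \<not> f \<beta>}"
    using level_ok_H_compl[OF levels_ok, of \<alpha> "{\<beta>. f \<beta>}"] x by auto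
  then show "x \<in> family f \<union> family (\<lambda>\<beta>. \<not> f \<beta>)" unfolding family_def by blast
qed

lemma family_disjoint: "family (\<lambda>\<beta>. \<not> f \<beta>) \<inter> family f = {}"
proof -
  have "HH m {\<beta>. \<not> f \<beta>} \<inter> HH m {\<beta>. f \<beta>} = {}" for m
    by (rule level_ok_H_disjoint[OF levels_ok]) blast
  then show ?thesis unfolding family_def using HH_common_level by blast
qed

lemma family_clopen: "clopenin (subtopology X (topspace X - {p})) (family f)"
proof -
  have "openin (subtopology X (topspace X - {p})) (family g)" for g
    using openin_subtopology_Int[OF family_open[of g], of "topspace X - {p}"] family_subset[of g]
    by (simp add: Int_absorb2)
  moreover have "topspace X \<inter> (topspace X - {p}) - family f = family (\<lambda>\<beta>. \<not> f \<beta>)"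
    using family_cover[of f] family_disjoint[of f] family_subset[of "\<lambda>\<beta>. \<not> f \<beta>"] by blast
  ultimately show ?thesis unfolding clopenin_def closedin_def using family_subset[of f] by auto
qed

lemma family_nonempty: "f \<alpha> \<Longrightarrow> family f \<noteq> {}"
  using HH_mono[of "{\<alpha>}" "{\<beta>. f \<beta>}" \<alpha>] HH_singleton_nonempty unfolding family_def by blast

text \<open>A compact subset of \<open>X - {p}\<close> lies in a single \<open>K \<delta>\<close>, but an unbounded support puts into
  \<open>family f\<close> the nonempty sets \<open>H \<beta> {\<beta>}\<close> for \<open>\<beta>\<close> beyond \<open>\<delta>\<close>, and these miss \<open>K \<delta>\<close>.\<close>

lemma family_not_compact:
  assumes unbounded: "\<forall>\<alpha>. \<exists>\<beta>. (\<alpha>, \<beta>) \<in> r \<and> \<alpha> \<noteq> \<beta> \<and> f \<beta>"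
  shows "\<not> compactin (subtopology X (topspace X - {p})) (family f)"
proof
  assume "compactin (subtopology X (topspace X - {p})) (family f)"
  then have "compactin X (family f)" by (simp add: compactin_subtopology)
  moreover have "\<forall>U\<in>range KK. openin X U"
    using level_ok_K_clopen[OF levels_ok] unfolding clopenin_def by auto
  moreover have "family f \<subseteq> \<Union>(range KK)" using family_subset KK_cover by blast
  ultimately obtain \<K> where \<K>: "finite \<K>" "\<K> \<subseteq> range KK" "family f \<subseteq> \<Union>\<K>"
    unfolding compactin_def by meson
  from finite_KK_bound[OF \<K>(1,2)] obtain \<delta> where "\<Union>\<K> \<subseteq> KK \<delta>" ..
  then have \<delta>: "family f \<subseteq> KK \<delta>" using \<K>(3) by blast
  obtain \<beta> where \<beta>: "(\<delta>, \<beta>) \<in> r" "\<delta> \<noteq> \<beta>" "f \<beta>" using unbounded by blast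
  have "HH \<beta> {\<beta>} \<subseteq> family f"
    unfolding family_def using HH_mono[of "{\<beta>}" "{\<beta>. f \<beta>}" \<beta>] \<beta>(3) by blast
  then have "HH \<beta> {\<beta>} = HH \<beta> {\<beta>} \<inter> KK \<delta>" using \<delta> by blast
  also have "\<dots> = HH \<delta> ({\<beta>} \<inter> under r \<delta>)"
    using level_ok_H_coherent[OF levels_ok \<beta>(1)] level_ok_H_restrict[OF levels_ok] by simp
  also have "{\<beta>} \<inter> under r \<delta> = {}" using \<beta> r_antisym under_iff by blast
  finally have "HH \<beta> {\<beta>} = {}"
    using level_ok_H_disjoint[OF levels_ok, where S = "{}" and T = "{}"] by simp
  then show False using HH_singleton_nonempty by blast
qed

lemma family_mono: "(\<And>\<alpha>. f \<alpha> \<Longrightarrow> g \<alpha>) \<Longrightarrow> family f \<subseteq> family g"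
  unfolding family_def using HH_mono[of "{\<beta>. f \<beta>}" "{\<beta>. g \<beta>}"] by blast

text \<open>Outside \<open>K \<delta>\<close> a point of \<open>family f\<close> lies at some level \<open>m\<close> beyond \<open>\<delta>\<close> in the image of the
  support of \<open>f\<close>; if it also lay in the image of the complement of the support of \<open>g\<close>, which
  meets that support only below \<open>\<delta>\<close>, it would lie in \<open>K \<delta>\<close>.\<close>

lemma family_Int_outside:
  assumes fg: "\<And>\<beta>. (\<delta>, \<beta>) \<in> r \<Longrightarrow> f \<beta> = g \<beta>"
  shows "family f \<inter> (topspace X - KK \<delta>) \<subseteq> family g"
proof
  fix x assume x: "x \<in> family f \<inter> (topspace X - KK \<delta>)"
  have "x \<notin> family (\<lambda>\<beta>. \<not> g \<beta>)"
  proof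
    assume "x \<in> family (\<lambda>\<beta>. \<not> g \<beta>)"
    then obtain m where m: "x \<in> HH m {\<beta>. f \<beta>}" "x \<in> HH m {\<beta>. \<not> g \<beta>}"
      using x HH_common_level unfolding family_def by blast
    have below: "{\<beta>. f \<beta>} \<inter> {\<beta>. \<not> g \<beta>} \<inter> under r m \<subseteq> underS r \<delta>"
      using fg not_r_imp_underS by blast
    show False
    proof (cases "\<delta> \<in> underS r m")
      case True
      then show False using level_ok_H_Int_below[OF levels_ok True below] m x by blast
    next
      case False
      then have "(m, \<delta>) \<in> r" using not_r_imp_underS by blast
      then show False using KK_mono level_ok_H_subset[OF levels_ok] m x by blast
    qed
  qed
  then show "x \<in> family g" using x family_subset family_cover by blast
qed

lemma family_eventually_eq:
  assumes "\<And>\<beta>. (\<delta>, \<beta>) \<in> r \<Longrightarrow> f \<beta> = g \<beta>"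
  shows "\<exists>U. clopenin X U \<and> p \<in> U \<and> family f \<inter> U = family g \<inter> U"
proof (intro exI conjI)
  show "clopenin X (topspace X - KK \<delta>)" by (rule clopenin_diff[OF clopenin_topspace level_ok_K_clopen[OF levels_ok]])
  show "p \<in> topspace X - KK \<delta>" using p_in_topspace KK_subset by blast
  show "family f \<inter> (topspace X - KK \<delta>) = family g \<inter> (topspace X - KK \<delta>)"
    using family_Int_outside[of \<delta> f g] family_Int_outside[of \<delta> g f] assms by force
qed

end

theorem lemma7p3:
  fixes r :: "'k rel" and X :: "'a topology" and p :: 'a
  assumes kappa: "card_order r" "infinite (UNIV :: 'k set)"
    and kk: "kappa_eq_kappa_lt_kappa r"
    and S: "kappa_Parovicenko (UNIV :: 'k set) X" "weight_eq X (UNIV :: 'k set)"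
    and pt: "P_kappa_point (UNIV :: 'k set) X p"
  shows "\<exists>A :: ('k \<Rightarrow> bool) \<Rightarrow> 'a set.
    (\<forall>f. clopenin (subtopology X (topspace X - {p})) (A f)) \<and>
    (\<forall>f. (\<exists>\<alpha>. f \<alpha>) \<longrightarrow> A f \<noteq> {}) \<and>
    (\<forall>f. (\<forall>\<alpha>. \<exists>\<beta>. (\<alpha>, \<beta>) \<in> r \<and> \<alpha> \<noteq> \<beta> \<and> f \<beta>) \<longrightarrow>
         \<not> compactin (subtopology X (topspace X - {p})) (A f)) \<and>
    (\<forall>f. A (\<lambda>\<alpha>. \<not> f \<alpha>) \<inter> A f = {}) \<and>
    (\<forall>f g. (\<forall>\<alpha>. f \<alpha> \<longrightarrow> g \<alpha>) \<longrightarrow> A f \<subseteq> A g) \<and>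
    (\<forall>f g. (\<exists>\<delta>. \<forall>\<beta>. (\<delta>, \<beta>) \<in> r \<longrightarrow> f \<beta> = g \<beta>) \<longrightarrow>
         (\<exists>U. clopenin X U \<and> p \<in> U \<and> A f \<inter> U = A g \<inter> U))"
proof -
  have zd: "zero_dimensional X" using S(1) unfolding kappa_Parovicenko_def by blast
  have p: "p \<in> topspace X" using pt unfolding P_kappa_point_def by blast
  obtain V :: "'k \<Rightarrow> 'a set" where V: "\<forall>\<alpha>. clopenin X (V \<alpha>) \<and> p \<notin> V \<alpha>" "topspace X - {p} \<subseteq> (\<Union>\<alpha>. V \<alpha>)"
    using clopen_cover_avoiding_point[OF zd S(2) kappa_Parovicenko_closedin_singleton[OF S(1) p]] by blast
  obtain E :: "'k \<Rightarrow> 'k set" where E: "\<forall>\<alpha> S. S \<subseteq> underS r \<alpha> \<longrightarrow> (\<exists>\<xi>. E \<xi> = S)"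
    using bounded_subsets_enumeration[OF kk kappa(2)] by blast
  interpret tower r X p V E
    using kappa S(1) pt V E by unfold_locales auto
  show ?thesis
  proof (intro exI[of _ family] conjI allI impI)
    fix f g :: "'k \<Rightarrow> bool"
    show "clopenin (subtopology X (topspace X - {p})) (family f)" by (rule family_clopen)
    show "family (\<lambda>\<alpha>. \<not> f \<alpha>) \<inter> family f = {}" by (rule family_disjoint)
    show "family f \<noteq> {}" if "\<exists>\<alpha>. f \<alpha>" using that family_nonempty by blast
    show "\<not> compactin (subtopology X (topspace X - {p})) (family f)"
      if "\<forall>\<alpha>. \<exists>\<beta>. (\<alpha>, \<beta>) \<in> r \<and> \<alpha> \<noteq> \<beta> \<and> f \<beta>" using that by (rule family_not_compact)
    show "family f \<subseteq> family g" if "\<forall>\<alpha>. f \<alpha> \<longrightarrow> g \<alpha>" using that by (simp add: family_mono)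
    show "\<exists>U. clopenin X U \<and> p \<in> U \<and> family f \<inter> U = family g \<inter> U"
      if "\<exists>\<delta>. \<forall>\<beta>. (\<delta>, \<beta>) \<in> r \<longrightarrow> f \<beta> = g \<beta>" using that family_eventually_eq by metis
  qed
qed

end
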